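(* Consider the $2$-user symmetric linear deterministic Z interference channel with unidirectional, rate-limited transmitter cooperation of capacity $C$ (a nonnegative integer) from transmitter $2$ to transmitter $1$, with integer parameters $m\ge 1$, $n\ge 0$, and suppose $1<\alpha<2$, where $\alpha=n/m$. Then the secrecy capacity region (under the perfect secrecy constraint) is the set of all $(R_1,R_2)$ with $R_1\ge0$, $R_2\ge0$ and $$R_1\le m,\qquad R_2\le 2m-n,\qquad R_1+R_2\le m+C.$$
   Context: Model: let $q=\max\{m,n\}$ and let $\mathbf{D}$ be the $q\times q$ downshift matrix over $\mathbb{F}_2$ (entries $d_{j',j''}=1$ if $2\le j'=j''+1\le q$, and $0$ otherwise). At each channel use, transmitter $i$ sends $\mathbf{x}_i\in\mathbb{F}_2^q$, and the outputs are $\mathbf{y}_1=\mathbf{D}^{q-m}\mathbf{x}_1\oplus\mathbf{D}^{q-n}\mathbf{x}_2$ and $\mathbf{y}_2=\mathbf{D}^{q-m}\mathbf{x}_2$, where $\oplus$ is componentwise addition mod $2$. Transmitter $i$ has a message $W_i$ uniform on $\{1,\dots,2^{NR_i}\}$ ($N$ = block length, rates in bits per channel use). Transmitter $2$ can send to transmitter $1$, over a noiseless secure link, at most $C$ bits per channel use; transmitter $2$'s signal depends only on $W_2$ (and possibly its own randomness), while transmitter $1$'s signal at each time is a function of $W_1$, the bits received so far over the cooperative link (causality), and possibly locally generated random bits. Receiver $i$ decodes $W_i$ from $\mathbf{y}_i^N$. A rate pair is achievable with perfect secrecy if there are such codes with decoding error probability tending to $0$ as $N\to\infty$ and $I(W_i;\mathbf{y}_j^N)=0$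 for $i\neq j$. The secrecy capacity region is the closure of the set of achievable rate pairs. *)

theory Defs
  imports "HOL-Probability.Probability"
begin

text \<open>Vectors in F_2^q are represented as functions nat => bool, where only the
components 1..q are meaningful (True = 1, False = 0); q x q matrices over F_2 as
functions nat => nat => bool with indices in 1..q.\<close>

type_synonym f2vec = "nat \<Rightarrow> bool"
type_synonym f2mat = "nat \<Rightarrow> nat \<Rightarrow> bool"

definition vadd :: "f2vec \<Rightarrow> f2vec \<Rightarrow> f2vec" where
  "vadd x y = (\<lambda>j. x j \<noteq> y j)"

definition mvmult :: "nat \<Rightarrow> f2mat \<Rightarrow> f2vec \<Rightarrow> f2vec" where
  "mvmult q A x = (\<lambda>j. 1 \<le> j \<and> j \<le> q \<and> odd (card {k \<in> {1..q}. A j k \<and> x k}))"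

definition mmult :: "nat \<Rightarrow> f2mat \<Rightarrow> f2mat \<Rightarrow> f2mat" where
  "mmult q A B = (\<lambda>j k. 1 \<le> j \<and> j \<le> q \<and> 1 \<le> k \<and> k \<le> q \<and>
                      odd (card {l \<in> {1..q}. A j l \<and> B l k}))"

definition mone :: "nat \<Rightarrow> f2mat" where
  "mone q = (\<lambda>j k. 1 \<le> j \<and> j \<le> q \<and> j = k)"

primrec mpow :: "nat \<Rightarrow> f2mat \<Rightarrow> nat \<Rightarrow> f2mat" where
  "mpow q A 0 = mone q"
| "mpow q A (Suc e) = mmult q A (mpow q A e)"

definition downshift :: "nat \<Rightarrow> f2mat" where
  "downshift q = (\<lambda>j' j''. 2 \<le> j' \<and> j' = j'' + 1 \<and> j' \<le> q \<and> 1 \<le> j'')"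

text \<open>Messages are W_i in {0..<M_i} (a relabelling of {1..M_i}).  Local randomness
of transmitter i is a random variable Q_i with an arbitrary (countable) distribution P_i.
At time t (t = 0..N-1) transmitter 2 sends over the cooperative link a symbol
link t w2 q2 < 2^C (i.e. at most C bits), and the channel input
enc2 t w2 q2.  Transmitter 1's input at time t is enc1 t w1 q1 ls, where ls is the list of
link symbols received at times 0..t-1 (causality).\<close>

record code =
  M1 :: nat
  M2 :: nat
  P1 :: "nat pmf"
  P2 :: "nat pmf"
  enc1 :: "nat \<Rightarrow> nat \<Rightarrow> nat \<Rightarrow> nat list \<Rightarrow> f2vec"
  enc2 :: "nat \<Rightarrow> nat \<Rightarrow> nat \<Rightarrow> f2vec"
  link :: "nat \<Rightarrow> nat \<Rightarrow> nat \<Rightarrow> nat"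
  dec1 :: "f2vec list \<Rightarrow> nat"
  dec2 :: "f2vec list \<Rightarrow> nat"

definition src :: "code \<Rightarrow> (nat \<times> nat \<times> nat \<times> nat) pmf" where
  "src c = do {
     w1 \<leftarrow> pmf_of_set {..<M1 c};
     w2 \<leftarrow> pmf_of_set {..<M2 c};
     q1 \<leftarrow> P1 c;
     q2 \<leftarrow> P2 c;
     return_pmf (w1, w2, q1, q2) }"

definition W1v :: "nat \<times> nat \<times> nat \<times> nat \<Rightarrow> nat" where
  "W1v \<omega> = (case \<omega> of (w1, w2, q1, q2) \<Rightarrow> w1)"
definition W2v :: "nat \<times> nat \<times> nat \<times> nat \<Rightarrow> nat" where
  "W2v \<omega> = (case \<omega> of (w1, w2, q1, q2) \<Rightarrow> w2)"

definition x1 :: "code \<Rightarrow> nat \<times> nat \<times> nat \<times> nat \<Rightarrow> nat \<Rightarrow> f2vec" where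
  "x1 c \<omega> t = (case \<omega> of (w1, w2, q1, q2) \<Rightarrow>
       enc1 c t w1 q1 (map (\<lambda>s. link c s w2 q2) [0..<t]))"

definition x2 :: "code \<Rightarrow> nat \<times> nat \<times> nat \<times> nat \<Rightarrow> nat \<Rightarrow> f2vec" where
  "x2 c \<omega> t = (case \<omega> of (w1, w2, q1, q2) \<Rightarrow> enc2 c t w2 q2)"

definition Y1 :: "nat \<Rightarrow> nat \<Rightarrow> nat \<Rightarrow> code \<Rightarrow> nat \<times> nat \<times> nat \<times> nat \<Rightarrow> f2vec list" where
  "Y1 m n N c \<omega> = (let q = max m n in
     map (\<lambda>t. vadd (mvmult q (mpow q (downshift q) (q - m)) (x1 c \<omega> t))
                   (mvmult q (mpow q (downshift q) (q - n)) (x2 c \<omega> t))) [0..<N])"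

definition Y2 :: "nat \<Rightarrow> nat \<Rightarrow> nat \<Rightarrow> code \<Rightarrow> nat \<times> nat \<times> nat \<times> nat \<Rightarrow> f2vec list" where
  "Y2 m n N c \<omega> = (let q = max m n in
     map (\<lambda>t. mvmult q (mpow q (downshift q) (q - m)) (x2 c \<omega> t)) [0..<N])"

definition err_prob :: "nat \<Rightarrow> nat \<Rightarrow> nat \<Rightarrow> code \<Rightarrow> real" where
  "err_prob m n N c = measure_pmf.prob (src c)
     {\<omega>. dec1 c (Y1 m n N c \<omega>) \<noteq> W1v \<omega> \<or> dec2 c (Y2 m n N c \<omega>) \<noteq> W2v \<omega>}"

definition MI :: "code \<Rightarrow> (nat \<times> nat \<times> nat \<times> nat \<Rightarrow> 'a) \<Rightarrow> (nat \<times> nat \<times> nat \<times> nat \<Rightarrow> 'b) \<Rightarrow> real" where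
  "MI c X Y = prob_space.mutual_information (measure_pmf (src c)) 2
                 (count_space (range X)) (count_space (range Y)) X Y"

definition secure_code :: "nat \<Rightarrow> nat \<Rightarrow> nat \<Rightarrow> nat \<Rightarrow> real \<Rightarrow> real \<Rightarrow> code \<Rightarrow> bool" where
  "secure_code m n C N R1 R2 c \<longleftrightarrow>
     M1 c = nat \<lceil>2 powr (real N * R1)\<rceil> \<and>
     M2 c = nat \<lceil>2 powr (real N * R2)\<rceil> \<and>
     (\<forall>t w2 q2. link c t w2 q2 < 2 ^ C) \<and>
     MI c W1v (Y2 m n N c) = 0 \<and>
     MI c W2v (Y1 m n N c) = 0"

definition achievable :: "nat \<Rightarrow> nat \<Rightarrow> nat \<Rightarrow> real \<times> real \<Rightarrow> bool" where
  "achievable m n C R \<longleftrightarrow> 0 \<le> fst R \<and> 0 \<le> snd R \<and>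
     (\<exists>cs :: nat \<Rightarrow> code.
        (\<forall>N. secure_code m n C N (fst R) (snd R) (cs N)) \<and>
        (\<lambda>N. err_prob m n N (cs N)) \<longlonglongrightarrow> 0)"

definition secrecy_capacity_region :: "nat \<Rightarrow> nat \<Rightarrow> nat \<Rightarrow> (real \<times> real) set" where
  "secrecy_capacity_region m n C = closure {R. achievable m n C R}"

end

theory Submission
  imports Defs
begin

text \<open>By Fano's inequality each rate is bounded by a mutual information. As \<open>m < n < 2m\<close>,
  the top \<open>k = n - m\<close> levels of \<open>y1\<close> carry transmitter 2's signal alone and reappear in \<open>y2\<close>;
  secrecy at receiver 1 makes \<open>W2\<close> independent of them, so \<open>W2\<close> can only use the remaining
  \<open>2m - n\<close> levels of \<open>y2\<close>. Receiver 1 could rebuild transmitter 2's signal from \<open>y1\<close>, \<open>W1\<close>,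
  transmitter 1's encoder and the link messages, which costs at most \<open>C\<close> bits per use and gives
  \<open>R1 + R2 \<le> m + C\<close>.

  Transmitter 2 sends \<open>min C (2m - n)\<close> bits per use both over the channel and over
  the link, so that transmitter 1 cancels them at receiver 1; in addition it may send private bits
  that transmitter 1 jams at receiver 1 with random key bits, a one-time pad. Time sharing between
  jamming and not jamming reaches the whole region up to closure.\<close>

definition entropy_pmf :: "'a pmf \<Rightarrow> real" where
  "entropy_pmf p = (\<Sum>x\<in>set_pmf p. pmf p x * - log 2 (pmf p x))"

lemma pmf_map_eq_sum:
  assumes "finite (set_pmf p)"
  shows "pmf (map_pmf f p) y = (\<Sum>x\<in>{x\<in>set_pmf p. f x = y}. pmf p x)"
proof -
  have "pmf (map_pmf f p) y = measure p (f -` {y} \<inter> set_pmf p)"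
    by (simp add: pmf_map measure_Int_set_pmf)
  also have "\<dots> = (\<Sum>x\<in>{x\<in>set_pmf p. f x = y}. pmf p x)"
    by (subst measure_measure_pmf_finite) (auto intro!: sum.cong simp: assms)
  finally show ?thesis .
qed

lemma measure_pmf_eq_sum_set_pmf:
  "finite (set_pmf p) \<Longrightarrow> measure p {x. P x} = (\<Sum>x\<in>{x\<in>set_pmf p. P x}. pmf p x)"
  by (subst measure_Int_set_pmf[symmetric], subst measure_measure_pmf_finite) (auto intro: sum.cong)

lemma sum_pmf_Pair_eq_pmf_map_fst:
  assumes "finite (set_pmf p)" "finite B" "snd ` set_pmf p \<subseteq> B"
  shows "(\<Sum>y\<in>B. pmf p (x, y)) = pmf (map_pmf fst p) x"
proof -
  have "(\<Sum>y\<in>B. pmf p (x, y)) = (\<Sum>s\<in>Pair x ` B. pmf p s)"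
    by (subst sum.reindex) (auto simp: inj_on_def)
  also have "\<dots> = measure p (Pair x ` B \<inter> set_pmf p)"
    using assms by (simp add: measure_measure_pmf_finite measure_Int_set_pmf)
  also have "Pair x ` B \<inter> set_pmf p = fst -` {x} \<inter> set_pmf p"
    using assms by force
  also have "measure p \<dots> = pmf (map_pmf fst p) x"
    by (simp add: measure_Int_set_pmf pmf_map)
  finally show ?thesis .
qed

lemma sum_set_pmf_map:
  assumes "finite (set_pmf p)"
  shows "(\<Sum>y\<in>set_pmf (map_pmf f p). pmf (map_pmf f p) y * g y) = (\<Sum>x\<in>set_pmf p. pmf p x * g (f x))"
proof -
  have "(\<Sum>x\<in>set_pmf p. pmf p x * g (f x))
      = (\<Sum>y\<in>f ` set_pmf p. \<Sum>x\<in>{x\<in>set_pmf p. f x = y}. pmf p x * g (f x))"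
    by (rule sum.image_gen[OF assms])
  also have "\<dots> = (\<Sum>y\<in>f ` set_pmf p. (\<Sum>x\<in>{x\<in>set_pmf p. f x = y}. pmf p x) * g y)"
    by (intro sum.cong refl) (auto simp: sum_distrib_right)
  finally show ?thesis by (simp add: pmf_map_eq_sum[OF assms])
qed

lemma pmf_map_pmf_pos: "x \<in> set_pmf p \<Longrightarrow> 0 < pmf (map_pmf f p) (f x)"
  by (simp add: pmf_positive)

lemma entropy_pmf_map:
  "finite (set_pmf p) \<Longrightarrow>
    entropy_pmf (map_pmf f p) = (\<Sum>x\<in>set_pmf p. pmf p x * - log 2 (pmf (map_pmf f p) (f x)))"
  unfolding entropy_pmf_def by (rule sum_set_pmf_map)

text \<open>Gibbs' inequality; each entropy inequality below is an instance for a suitable weight \<open>q\<close>.\<close>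

lemma entropy_pmf_le_cross_entropy:
  assumes fin: "finite (set_pmf p)"
    and pos: "\<And>x. x \<in> set_pmf p \<Longrightarrow> 0 < q x"
    and le1: "(\<Sum>x\<in>set_pmf p. q x) \<le> 1"
  shows "entropy_pmf p \<le> (\<Sum>x\<in>set_pmf p. pmf p x * - log 2 (q x))"
proof -
  have "(\<Sum>x\<in>set_pmf p. pmf p x * ln (q x / pmf p x))
      \<le> (\<Sum>x\<in>set_pmf p. pmf p x * (q x / pmf p x - 1))"
    by (intro sum_mono mult_left_mono ln_le_minus_one) (auto simp: pos pmf_positive)
  also have "\<dots> = (\<Sum>x\<in>set_pmf p. q x) - (\<Sum>x\<in>set_pmf p. pmf p x)"
    by (simp add: sum_subtractf right_diff_distrib set_pmf_iff)
  also have "\<dots> \<le> 0"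
    using le1 sum_pmf_eq_1[OF fin] by simp
  finally have "(\<Sum>x\<in>set_pmf p. pmf p x * ln (q x / pmf p x)) / ln 2 \<le> 0"
    by (simp add: divide_nonpos_pos)
  moreover have pointwise: "pmf p x * ln (q x / pmf p x) / ln 2
      = pmf p x * - log 2 (pmf p x) - pmf p x * - log 2 (q x)" if "x \<in> set_pmf p" for x
    using pos[OF that] that by (simp add: pmf_positive log_def ln_div diff_divide_distrib algebra_simps)
  have "(\<Sum>x\<in>set_pmf p. pmf p x * ln (q x / pmf p x)) / ln 2
      = entropy_pmf p - (\<Sum>x\<in>set_pmf p. pmf p x * - log 2 (q x))"
    unfolding entropy_pmf_def sum_divide_distrib sum_subtractf[symmetric]
    by (intro sum.cong refl) (rule pointwise)
  ultimately show ?thesis by linarith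
qed

lemma entropy_pmf_le_log_card:
  assumes "finite A" "set_pmf p \<subseteq> A"
  shows "entropy_pmf p \<le> log 2 (card A)"
proof -
  have fin: "finite (set_pmf p)" using assms finite_subset by blast
  have cA: "0 < card A" using assms set_pmf_not_empty[of p] by (auto simp: card_gt_0_iff)
  have "entropy_pmf p \<le> (\<Sum>x\<in>set_pmf p. pmf p x * - log 2 (1 / card A))"
  proof (rule entropy_pmf_le_cross_entropy[OF fin])
    have "(\<Sum>x\<in>set_pmf p. 1 / real (card A)) = card (set_pmf p) / card A" by simp
    also have "\<dots> \<le> 1" using cA card_mono[OF assms] by simp
    finally show "(\<Sum>x\<in>set_pmf p. 1 / real (card A)) \<le> 1" .
  qed (use cA in simp)
  also have "\<dots> = log 2 (card A)"
    using cA by (simp add: log_divide sum_distrib_right[symmetric] sum_pmf_eq_1[OF fin])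
  finally show ?thesis .
qed

lemma entropy_pmf_map_le:
  assumes fin: "finite (set_pmf p)"
  shows "entropy_pmf (map_pmf f p) \<le> entropy_pmf p"
  unfolding entropy_pmf_map[OF fin] unfolding entropy_pmf_def
proof (intro sum_mono mult_left_mono)
  fix x assume x: "x \<in> set_pmf p"
  have "pmf p x \<le> pmf (map_pmf f p) (f x)"
    unfolding pmf_map_eq_sum[OF fin] by (rule member_le_sum) (use x fin in auto)
  then show "- log 2 (pmf (map_pmf f p) (f x)) \<le> - log 2 (pmf p x)"
    using x by (simp add: pmf_positive)
qed simp

lemma entropy_pmf_of_set:
  assumes "finite S" "S \<noteq> {}"
  shows "entropy_pmf (pmf_of_set S) = log 2 (card S)"
proof -
  have "entropy_pmf (pmf_of_set S) = (\<Sum>x\<in>S. log 2 (card S) / card S)"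
    unfolding entropy_pmf_def using assms by (intro sum.cong) (auto simp: log_divide)
  then show ?thesis using assms by simp
qed

lemma sum_product_Times:
  "(\<Sum>s\<in>A \<times> B. f (fst s) * g (snd s)) = sum f A * (sum g B :: 'a :: comm_semiring_0)"
  by (simp add: sum_product sum.cartesian_product split_def)

lemma entropy_pmf_pair:
  assumes fp: "finite (set_pmf p)" and fq: "finite (set_pmf q)"
  shows "entropy_pmf (pair_pmf p q) = entropy_pmf p + entropy_pmf q"
proof -
  have "entropy_pmf (pair_pmf p q)
      = (\<Sum>s\<in>set_pmf p \<times> set_pmf q. (pmf p (fst s) * - log 2 (pmf p (fst s))) * pmf q (snd s))
      + (\<Sum>s\<in>set_pmf p \<times> set_pmf q. pmf p (fst s) * (pmf q (snd s) * - log 2 (pmf q (snd s))))"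
    unfolding entropy_pmf_def set_pair_pmf sum.distrib[symmetric]
    by (intro sum.cong) (auto simp: pmf_pair log_mult pmf_positive algebra_simps)
  also have "\<dots> = entropy_pmf p * sum (pmf q) (set_pmf q) + sum (pmf p) (set_pmf p) * entropy_pmf q"
    by (simp only: sum_product_Times[where f="\<lambda>a. pmf p a * - log 2 (pmf p a)" and g="pmf q"]
        sum_product_Times[where f="pmf p" and g="\<lambda>b. pmf q b * - log 2 (pmf q b)"] entropy_pmf_def)
  finally show ?thesis by (simp add: sum_pmf_eq_1 fp fq)
qed

lemma entropy_pmf_subadditive:
  fixes p :: "('a \<times> 'b) pmf"
  assumes fin: "finite (set_pmf p)"
  shows "entropy_pmf p \<le> entropy_pmf (map_pmf fst p) + entropy_pmf (map_pmf snd p)"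
proof -
  define q where "q s = pmf (map_pmf fst p) (fst s) * pmf (map_pmf snd p) (snd s)" for s
  have "entropy_pmf p \<le> (\<Sum>s\<in>set_pmf p. pmf p s * - log 2 (q s))"
  proof (rule entropy_pmf_le_cross_entropy[OF fin])
    have "(\<Sum>s\<in>set_pmf p. q s) \<le> (\<Sum>s\<in>set_pmf (map_pmf fst p) \<times> set_pmf (map_pmf snd p). q s)"
      by (rule sum_mono2) (use fin in \<open>force simp: q_def\<close>)+
    also have "\<dots> = 1"
      using fin by (simp only: q_def sum_product_Times) (simp add: sum_pmf_eq_1)
    finally show "(\<Sum>s\<in>set_pmf p. q s) \<le> 1" .
  qed (simp add: q_def pmf_map_pmf_pos)
  also have "\<dots> = entropy_pmf (map_pmf fst p) + entropy_pmf (map_pmf snd p)"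
    unfolding entropy_pmf_map[OF fin] sum.distrib[symmetric]
    by (intro sum.cong refl) (simp add: q_def log_mult_pos pmf_map_pmf_pos algebra_simps)
  finally show ?thesis .
qed

lemma entropy_pmf_strong_subadditive:
  fixes p :: "('a \<times> 'b \<times> 'c) pmf"
  assumes fin: "finite (set_pmf p)"
  defines "pXY \<equiv> map_pmf (\<lambda>(x, y, z). (x, y)) p" and "pXZ \<equiv> map_pmf (\<lambda>(x, y, z). (x, z)) p"
  shows "entropy_pmf p + entropy_pmf (map_pmf fst p) \<le> entropy_pmf pXY + entropy_pmf pXZ"
proof -
  define pX where "pX = map_pmf fst p"
  define q where "q s = pmf pXY (case s of (x, y, z) \<Rightarrow> (x, y)) * pmf pXZ (case s of (x, y, z) \<Rightarrow> (x, z))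
    / pmf pX (fst s)" for s
  define Y where "Y = (\<lambda>(x, y, z). y) ` set_pmf p"
  define Z where "Z = (\<lambda>(x, y, z). z) ` set_pmf p"
  have marg: "(\<Sum>y\<in>Y. pmf pXY (x, y)) = pmf pX x" "(\<Sum>z\<in>Z. pmf pXZ (x, z)) = pmf pX x" for x
    unfolding pXY_def pXZ_def pX_def Y_def Z_def
    by (subst sum_pmf_Pair_eq_pmf_map_fst; force simp: fin map_pmf_comp split_def)+
  have pos: "0 < pmf pX x" if "x \<in> set_pmf pX" for x
    using that by (simp add: pmf_positive)
  have "entropy_pmf p \<le> (\<Sum>s\<in>set_pmf p. pmf p s * - log 2 (q s))"
  proof (rule entropy_pmf_le_cross_entropy[OF fin])
    have "(\<Sum>s\<in>set_pmf p. q s) \<le> (\<Sum>s\<in>set_pmf pX \<times> Y \<times> Z. q s)"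
      by (rule sum_mono2) (use fin in \<open>force simp: q_def pX_def Y_def Z_def split: prod.splits\<close>)+
    also have "\<dots> = (\<Sum>x\<in>set_pmf pX. \<Sum>y\<in>Y. \<Sum>z\<in>Z. pmf pXY (x, y) * pmf pXZ (x, z) / pmf pX x)"
      by (simp only: sum.cartesian_product) (intro sum.cong refl, auto simp: q_def)
    also have "\<dots> = (\<Sum>x\<in>set_pmf pX. (\<Sum>y\<in>Y. pmf pXY (x, y)) * (\<Sum>z\<in>Z. pmf pXZ (x, z)) / pmf pX x)"
      by (intro sum.cong refl) (simp add: sum_product sum_divide_distrib)
    also have "\<dots> = (\<Sum>x\<in>set_pmf pX. pmf pX x)"
      using pos by (simp add: marg)
    also have "\<dots> = 1"
      using fin by (simp add: sum_pmf_eq_1 pX_def)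
    finally show "(\<Sum>s\<in>set_pmf p. q s) \<le> 1" .
  qed (simp add: q_def pXY_def pXZ_def pX_def pmf_map_pmf_pos)
  also have "\<dots> = entropy_pmf pXY + entropy_pmf pXZ - entropy_pmf pX"
    unfolding pXY_def pXZ_def pX_def entropy_pmf_map[OF fin] sum_subtractf[symmetric]
      sum.distrib[symmetric]
    by (intro sum.cong refl)
      (simp add: q_def pXY_def pXZ_def pX_def log_mult_pos log_divide_pos pmf_map_pmf_pos algebra_simps)
  finally show ?thesis by (simp add: pX_def)
qed

lemma entropy_pmf_conditional_le:
  fixes p :: "('w \<times> 'y) pmf"
  assumes fin: "finite (set_pmf p)" and W: "finite W" "fst ` set_pmf p \<subseteq> W"
    and pos: "\<And>s. s \<in> set_pmf p \<Longrightarrow> 0 < \<rho> s" and nonneg: "\<And>s. 0 \<le> \<rho> s"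
    and le1: "\<And>y. (\<Sum>w\<in>W. \<rho> (w, y)) \<le> 1"
  shows "entropy_pmf p - entropy_pmf (map_pmf snd p) \<le> (\<Sum>s\<in>set_pmf p. pmf p s * - log 2 (\<rho> s))"
proof -
  define pY where "pY = map_pmf snd p"
  have "entropy_pmf p \<le> (\<Sum>s\<in>set_pmf p. pmf p s * - log 2 (pmf pY (snd s) * \<rho> s))"
  proof (rule entropy_pmf_le_cross_entropy[OF fin])
    have "(\<Sum>s\<in>set_pmf p. pmf pY (snd s) * \<rho> s) \<le> (\<Sum>s\<in>W \<times> set_pmf pY. pmf pY (snd s) * \<rho> s)"
      by (rule sum_mono2) (use fin W nonneg in \<open>auto simp: pY_def intro: rev_image_eqI\<close>)
    also have "\<dots> = (\<Sum>w\<in>W. \<Sum>y\<in>set_pmf pY. pmf pY y * \<rho> (w, y))"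
      by (simp add: sum.cartesian_product split_def)
    also have "\<dots> = (\<Sum>y\<in>set_pmf pY. pmf pY y * (\<Sum>w\<in>W. \<rho> (w, y)))"
      by (simp add: sum.swap[of _ W] sum_distrib_left)
    also have "\<dots> \<le> (\<Sum>y\<in>set_pmf pY. pmf pY y)"
      by (intro sum_mono mult_left_le) (simp_all add: le1)
    also have "\<dots> = 1"
      using fin by (simp add: sum_pmf_eq_1 pY_def)
    finally show "(\<Sum>s\<in>set_pmf p. pmf pY (snd s) * \<rho> s) \<le> 1" .
  qed (simp add: pos pY_def pmf_map_pmf_pos)
  also have "\<dots> = entropy_pmf pY + (\<Sum>s\<in>set_pmf p. pmf p s * - log 2 (\<rho> s))"
    unfolding pY_def entropy_pmf_map[OF fin] sum.distrib[symmetric]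
    by (intro sum.cong refl) (simp add: pos pmf_map_pmf_pos log_mult_pos algebra_simps)
  finally show ?thesis by (simp add: pY_def)
qed

text \<open>Fano's inequality: guess \<open>w = g y\<close> with weight \<open>1/2\<close> and spread the other half uniformly
  over the \<open>M\<close> candidates.\<close>

lemma entropy_pmf_fano:
  fixes p :: "('w \<times> 'y) pmf" and g :: "'y \<Rightarrow> 'w"
  assumes fin: "finite (set_pmf p)" and W: "finite W" "fst ` set_pmf p \<subseteq> W" "card W = M"
  shows "entropy_pmf p - entropy_pmf (map_pmf snd p) \<le> 1 + measure p {s. g (snd s) \<noteq> fst s} * log 2 M"
proof -
  have M0: "0 < M" using W set_pmf_not_empty[of p] by (auto simp: card_gt_0_iff)
  define \<rho> where "\<rho> s = (if g (snd s) = fst s then 1/2 else 1 / (2 * real M))" for s :: "'w \<times> 'y"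
  have "entropy_pmf p - entropy_pmf (map_pmf snd p) \<le> (\<Sum>s\<in>set_pmf p. pmf p s * - log 2 (\<rho> s))"
  proof (rule entropy_pmf_conditional_le[OF fin W(1,2)])
    show "(\<Sum>w\<in>W. \<rho> (w, y)) \<le> 1" for y
    proof -
      have "(\<Sum>w\<in>W. \<rho> (w, y)) \<le> (\<Sum>w\<in>W. 1 / (2 * real M) + (if w = g y then 1/2 else 0))"
        by (intro sum_mono) (auto simp: \<rho>_def)
      also have "\<dots> \<le> 1"
        using W M0 by (simp add: sum.distrib)
      finally show ?thesis .
    qed
  qed (use M0 in \<open>simp_all add: \<rho>_def\<close>)
  also have "\<dots> = (\<Sum>s\<in>set_pmf p. pmf p s) + (\<Sum>s\<in>set_pmf p. if g (snd s) \<noteq> fst s then pmf p s * log 2 M else 0)"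
    unfolding sum.distrib[symmetric] using M0
    by (intro sum.cong refl) (simp add: \<rho>_def log_divide_pos log_mult_pos algebra_simps)
  also have "(\<Sum>s\<in>set_pmf p. if g (snd s) \<noteq> fst s then pmf p s * log 2 M else 0)
      = (\<Sum>s\<in>{s\<in>set_pmf p. g (snd s) \<noteq> fst s}. pmf p s) * log 2 M"
    by (simp add: sum.inter_filter[OF fin, symmetric] sum_distrib_right)
  also have "(\<Sum>s\<in>{s\<in>set_pmf p. g (snd s) \<noteq> fst s}. pmf p s) = measure p {s. g (snd s) \<noteq> fst s}"
    by (rule measure_pmf_eq_sum_set_pmf[OF fin, symmetric])
  finally show ?thesis using fin by (simp add: sum_pmf_eq_1)
qed

lemma finite_image_pair:
  "finite (X ` S) \<Longrightarrow> finite (Y ` S) \<Longrightarrow> finite ((\<lambda>\<omega>. (X \<omega>, Y \<omega>)) ` S)"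
  by (rule finite_subset[of _ "X ` S \<times> Y ` S"]) auto

lemma finite_imageI_subset:
  "finite A \<Longrightarrow> (\<And>\<omega>. \<omega> \<in> S \<Longrightarrow> X \<omega> \<in> A) \<Longrightarrow> finite (X ` S)"
  by (rule finite_subset[of _ A]) auto

definition entropy_rv :: "'o pmf \<Rightarrow> ('o \<Rightarrow> 'a) \<Rightarrow> real" where
  "entropy_rv \<mu> X = entropy_pmf (map_pmf X \<mu>)"

lemma entropy_rv_function_le:
  assumes "finite (X ` set_pmf \<mu>)" "\<And>\<omega>. \<omega> \<in> set_pmf \<mu> \<Longrightarrow> Y \<omega> = f (X \<omega>)"
  shows "entropy_rv \<mu> Y \<le> entropy_rv \<mu> X"
proof -
  have "map_pmf Y \<mu> = map_pmf f (map_pmf X \<mu>)"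
    by (simp add: map_pmf_comp assms(2) cong: map_pmf_cong)
  then show ?thesis
    unfolding entropy_rv_def using entropy_pmf_map_le[of "map_pmf X \<mu>" f] assms(1) by simp
qed

lemma entropy_rv_function_eq:
  assumes "finite (X ` set_pmf \<mu>)"
    and "\<And>\<omega>. \<omega> \<in> set_pmf \<mu> \<Longrightarrow> Y \<omega> = f (X \<omega>)" "\<And>\<omega>. \<omega> \<in> set_pmf \<mu> \<Longrightarrow> X \<omega> = g (Y \<omega>)"
  shows "entropy_rv \<mu> Y = entropy_rv \<mu> X"
proof -
  have "Y ` set_pmf \<mu> = f ` X ` set_pmf \<mu>"
    using assms(2) by force
  then have "finite (Y ` set_pmf \<mu>)"
    using assms(1) by simp
  then have "entropy_rv \<mu> X \<le> entropy_rv \<mu> Y"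
    using assms(3) by (rule entropy_rv_function_le)
  moreover have "entropy_rv \<mu> Y \<le> entropy_rv \<mu> X"
    using assms(1,2) by (rule entropy_rv_function_le)
  ultimately show ?thesis by simp
qed

lemma entropy_rv_le_log_card:
  "finite A \<Longrightarrow> (\<And>\<omega>. \<omega> \<in> set_pmf \<mu> \<Longrightarrow> X \<omega> \<in> A) \<Longrightarrow> entropy_rv \<mu> X \<le> log 2 (card A)"
  unfolding entropy_rv_def by (rule entropy_pmf_le_log_card) auto

lemma entropy_rv_pair_le:
  "finite (X ` set_pmf \<mu>) \<Longrightarrow> finite (Y ` set_pmf \<mu>) \<Longrightarrow>
    entropy_rv \<mu> (\<lambda>\<omega>. (X \<omega>, Y \<omega>)) \<le> entropy_rv \<mu> X + entropy_rv \<mu> Y"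
  using entropy_pmf_subadditive[of "map_pmf (\<lambda>\<omega>. (X \<omega>, Y \<omega>)) \<mu>"]
  by (simp add: entropy_rv_def map_pmf_comp finite_image_pair)

lemma entropy_rv_strong_subadditive:
  assumes "finite (X ` set_pmf \<mu>)" "finite (Y ` set_pmf \<mu>)" "finite (Z ` set_pmf \<mu>)"
  shows "entropy_rv \<mu> (\<lambda>\<omega>. (X \<omega>, Y \<omega>, Z \<omega>)) + entropy_rv \<mu> X
    \<le> entropy_rv \<mu> (\<lambda>\<omega>. (X \<omega>, Y \<omega>)) + entropy_rv \<mu> (\<lambda>\<omega>. (X \<omega>, Z \<omega>))"
  using entropy_pmf_strong_subadditive[of "map_pmf (\<lambda>\<omega>. (X \<omega>, Y \<omega>, Z \<omega>)) \<mu>"] assms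
  by (simp add: entropy_rv_def map_pmf_comp finite_image_pair)

lemma entropy_rv_pair_indep:
  assumes "finite (X ` set_pmf \<mu>)" "finite (Y ` set_pmf \<mu>)"
    and "map_pmf (\<lambda>\<omega>. (X \<omega>, Y \<omega>)) \<mu> = pair_pmf (map_pmf X \<mu>) (map_pmf Y \<mu>)"
  shows "entropy_rv \<mu> (\<lambda>\<omega>. (X \<omega>, Y \<omega>)) = entropy_rv \<mu> X + entropy_rv \<mu> Y"
  unfolding entropy_rv_def assms(3) by (rule entropy_pmf_pair) (use assms in auto)

lemma entropy_rv_fano:
  assumes "finite A" "card A = M" "\<And>\<omega>. \<omega> \<in> set_pmf \<mu> \<Longrightarrow> W \<omega> \<in> A" "finite (Y ` set_pmf \<mu>)"
  shows "entropy_rv \<mu> (\<lambda>\<omega>. (W \<omega>, Y \<omega>)) - entropy_rv \<mu> Y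
    \<le> 1 + measure \<mu> {\<omega>. g (Y \<omega>) \<noteq> W \<omega>} * log 2 M"
proof -
  have "finite (W ` set_pmf \<mu>)"
    by (rule finite_imageI_subset) (use assms in auto)
  then have "entropy_pmf (map_pmf (\<lambda>\<omega>. (W \<omega>, Y \<omega>)) \<mu>) - entropy_pmf (map_pmf snd (map_pmf (\<lambda>\<omega>. (W \<omega>, Y \<omega>)) \<mu>))
      \<le> 1 + measure (map_pmf (\<lambda>\<omega>. (W \<omega>, Y \<omega>)) \<mu>) {s. g (snd s) \<noteq> fst s} * log 2 M"
    by (intro entropy_pmf_fano) (use assms in \<open>auto simp: finite_image_pair image_image\<close>)
  then show ?thesis
    by (simp add: entropy_rv_def map_pmf_comp measure_map_pmf vimage_def)
qed

lemma emeasure_distr_pmf_singleton: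
  fixes \<mu> :: "'o pmf"
  assumes "a \<in> A" "\<And>x. X x \<in> A"
  shows "emeasure (distr (measure_pmf \<mu>) (count_space A) X) {a} = ennreal (pmf (map_pmf X \<mu>) a)"
  using assms by (subst emeasure_distr) (auto simp: pmf_map measure_pmf.emeasure_eq_measure vimage_def)

lemma emeasure_pair_distr_pmf_singleton:
  fixes \<mu> :: "'o pmf"
  assumes "a \<in> range X" "b \<in> range Y"
  shows "emeasure (distr (measure_pmf \<mu>) (count_space (range X)) X \<Otimes>\<^sub>M
      distr (measure_pmf \<mu>) (count_space (range Y)) Y) {(a, b)}
    = ennreal (pmf (map_pmf X \<mu>) a * pmf (map_pmf Y \<mu>) b)"
proof -
  interpret DY: prob_space "distr (measure_pmf \<mu>) (count_space (range Y)) Y"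
    by (rule measure_pmf.prob_space_distr) simp
  have "emeasure (distr (measure_pmf \<mu>) (count_space (range X)) X \<Otimes>\<^sub>M
      distr (measure_pmf \<mu>) (count_space (range Y)) Y) ({a} \<times> {b})
    = emeasure (distr (measure_pmf \<mu>) (count_space (range X)) X) {a} *
      emeasure (distr (measure_pmf \<mu>) (count_space (range Y)) Y) {b}"
    using assms by (intro DY.emeasure_pair_measure_Times) auto
  then show ?thesis
    using assms by (simp add: emeasure_distr_pmf_singleton ennreal_mult)
qed

lemma emeasure_joint_distr_pmf_singleton:
  fixes \<mu> :: "'o pmf"
  assumes "countable (range X)" "countable (range Y)" "a \<in> range X" "b \<in> range Y"
  shows "emeasure (distr (measure_pmf \<mu>) (count_space (range X) \<Otimes>\<^sub>M count_space (range Y))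
      (\<lambda>\<omega>. (X \<omega>, Y \<omega>))) {(a, b)}
    = ennreal (pmf (map_pmf (\<lambda>\<omega>. (X \<omega>, Y \<omega>)) \<mu>) (a, b))"
  unfolding pair_measure_countable[OF assms(1,2)]
  using assms(3,4) by (intro emeasure_distr_pmf_singleton) auto

lemma sets_pair_distr_count_space:
  fixes \<mu> :: "'o pmf"
  assumes "countable (range X)" "countable (range Y)"
  shows "sets (distr (measure_pmf \<mu>) (count_space (range X)) X \<Otimes>\<^sub>M
      distr (measure_pmf \<mu>) (count_space (range Y)) Y)
    = Pow (range X \<times> range Y)"
proof -
  have "sets (distr (measure_pmf \<mu>) (count_space (range X)) X \<Otimes>\<^sub>M
      distr (measure_pmf \<mu>) (count_space (range Y)) Y)
      = sets (count_space (range X) \<Otimes>\<^sub>M count_space (range Y))"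
    by (rule sets_pair_measure_cong) simp_all
  then show ?thesis
    unfolding pair_measure_countable[OF assms] by simp
qed

lemma pair_distr_eq_joint_distr_iff:
  fixes \<mu> :: "'o pmf" and X :: "'o \<Rightarrow> 'a" and Y :: "'o \<Rightarrow> 'b"
  assumes cX: "countable (range X)" and cY: "countable (range Y)"
  shows "distr (measure_pmf \<mu>) (count_space (range X)) X \<Otimes>\<^sub>M distr (measure_pmf \<mu>) (count_space (range Y)) Y
      = distr (measure_pmf \<mu>) (count_space (range X) \<Otimes>\<^sub>M count_space (range Y)) (\<lambda>\<omega>. (X \<omega>, Y \<omega>))
    \<longleftrightarrow> map_pmf (\<lambda>\<omega>. (X \<omega>, Y \<omega>)) \<mu> = pair_pmf (map_pmf X \<mu>) (map_pmf Y \<mu>)"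
    (is "?P = ?Q \<longleftrightarrow> ?joint = ?pair")
proof -
  have sets: "sets ?P = Pow (range X \<times> range Y)" "sets ?Q = Pow (range X \<times> range Y)"
    by (simp_all add: sets_pair_distr_count_space cX cY pair_measure_countable)
  have outside: "pmf ?joint (a, b) = pmf ?pair (a, b)" if "a \<notin> range X \<or> b \<notin> range Y" for a b
  proof -
    have "(a, b) \<notin> (\<lambda>\<omega>. (X \<omega>, Y \<omega>)) ` set_pmf \<mu>" "a \<notin> X ` set_pmf \<mu> \<or> b \<notin> Y ` set_pmf \<mu>"
      using that by auto
    then show ?thesis
      by (auto simp: pmf_pair pmf_map_outside)
  qed
  show ?thesis
  proof
    assume "?P = ?Q"
    show "?joint = ?pair"
    proof (rule pmf_eqI)
      fix i :: "'a \<times> 'b"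
      obtain a b where i: "i = (a, b)" by force
      show "pmf ?joint i = pmf ?pair i"
      proof (cases "a \<in> range X \<and> b \<in> range Y")
        case True
        then show ?thesis
          using emeasure_pair_distr_pmf_singleton[of a X b Y \<mu>]
            emeasure_joint_distr_pmf_singleton[OF cX cY, of a b \<mu>]
            \<open>?P = ?Q\<close> by (simp add: i pmf_pair)
      qed (use outside i in auto)
    qed
  next
    assume joint: "?joint = ?pair"
    show "?P = ?Q"
      by (rule measure_eqI_countable[OF sets])
        (auto simp: emeasure_pair_distr_pmf_singleton emeasure_joint_distr_pmf_singleton cX cY joint pmf_pair)
  qed
qed

lemma joint_distr_absolutely_continuous:
  fixes \<mu> :: "'o pmf" and X :: "'o \<Rightarrow> 'a" and Y :: "'o \<Rightarrow> 'b"
  assumes cX: "countable (range X)" and cY: "countable (range Y)"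
  shows "absolutely_continuous
    (distr (measure_pmf \<mu>) (count_space (range X)) X \<Otimes>\<^sub>M distr (measure_pmf \<mu>) (count_space (range Y)) Y)
    (distr (measure_pmf \<mu>) (count_space (range X) \<Otimes>\<^sub>M count_space (range Y)) (\<lambda>\<omega>. (X \<omega>, Y \<omega>)))"
    (is "absolutely_continuous ?P ?Q")
  unfolding absolutely_continuous_def
proof
  fix E assume E: "E \<in> null_sets ?P"
  have "sets ?P = Pow (range X \<times> range Y)"
    by (rule sets_pair_distr_count_space[OF cX cY])
  then have E_sub: "E \<subseteq> range X \<times> range Y"
    using E null_setsD2 by blast
  text \<open>Every atom \<open>(X \<omega>, Y \<omega>)\<close> has positive product measure, so \<open>E\<close> misses the support.\<close>
  have "set_pmf \<mu> \<inter> (\<lambda>\<omega>. (X \<omega>, Y \<omega>)) -` E = {}"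
  proof (rule ccontr)
    assume "set_pmf \<mu> \<inter> (\<lambda>\<omega>. (X \<omega>, Y \<omega>)) -` E \<noteq> {}"
    then obtain \<omega> where \<omega>: "\<omega> \<in> set_pmf \<mu>" "(X \<omega>, Y \<omega>) \<in> E" by auto
    have "emeasure ?P {(X \<omega>, Y \<omega>)} \<le> emeasure ?P E"
      by (rule emeasure_mono) (use \<omega> E_sub \<open>sets ?P = _\<close> in auto)
    also have "\<dots> = 0" using E by auto
    finally have "pmf (map_pmf X \<mu>) (X \<omega>) * pmf (map_pmf Y \<mu>) (Y \<omega>) = 0"
      by (simp add: emeasure_pair_distr_pmf_singleton)
    moreover have "0 < pmf (map_pmf X \<mu>) (X \<omega>)" "0 < pmf (map_pmf Y \<mu>) (Y \<omega>)"
      using \<omega> by (simp_all add: pmf_map_pmf_pos)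
    ultimately show False by simp
  qed
  moreover have E_sets: "E \<in> sets (count_space (range X) \<Otimes>\<^sub>M count_space (range Y))"
    unfolding pair_measure_countable[OF cX cY] using E_sub by simp
  ultimately have "emeasure ?Q E = 0"
    by (subst emeasure_distr)
      (auto simp: measure_pmf_zero_iff measure_pmf.emeasure_eq_measure space_pair_measure)
  then show "E \<in> null_sets ?Q"
    using E_sets by auto
qed

lemma mutual_information_pmf_eq_0_iff:
  fixes \<mu> :: "'o pmf" and X :: "'o \<Rightarrow> 'a" and Y :: "'o \<Rightarrow> 'b"
  assumes cX: "countable (range X)" and cY: "countable (range Y)"
    and fin: "finite ((\<lambda>\<omega>. (X \<omega>, Y \<omega>)) ` set_pmf \<mu>)"
  shows "prob_space.mutual_information (measure_pmf \<mu>) 2 (count_space (range X)) (count_space (range Y)) X Y = 0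
    \<longleftrightarrow> map_pmf (\<lambda>\<omega>. (X \<omega>, Y \<omega>)) \<mu> = pair_pmf (map_pmf X \<mu>) (map_pmf Y \<mu>)"
proof -
  define P where "P = distr (measure_pmf \<mu>) (count_space (range X)) X \<Otimes>\<^sub>M
    distr (measure_pmf \<mu>) (count_space (range Y)) Y"
  define Q where "Q = distr (measure_pmf \<mu>) (count_space (range X) \<Otimes>\<^sub>M count_space (range Y)) (\<lambda>\<omega>. (X \<omega>, Y \<omega>))"
  interpret DX: prob_space "distr (measure_pmf \<mu>) (count_space (range X)) X"
    by (rule measure_pmf.prob_space_distr) simp
  interpret DY: prob_space "distr (measure_pmf \<mu>) (count_space (range Y)) Y"
    by (rule measure_pmf.prob_space_distr) simp
  have "prob_space P"
    unfolding P_def by (intro prob_space_pair) unfold_locales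
  interpret P: information_space P 2
    by (rule information_space.intro[OF \<open>prob_space P\<close>]) (unfold_locales, simp)
  have Q: "prob_space Q"
    unfolding Q_def by (rule measure_pmf.prob_space_distr) (simp add: space_pair_measure)
  have sets: "sets Q = sets P"
    unfolding P_def Q_def by (simp add: sets_pair_distr_count_space cX cY pair_measure_countable)
  text \<open>The entropy density is integrable because \<open>(X, Y)\<close> takes only finitely many values.\<close>
  have "integrable (measure_pmf \<mu>) (\<lambda>\<omega>. entropy_density 2 P Q (X \<omega>, Y \<omega>))"
    by (rule measure_pmf.integrable_const_bound
        [where B="Max ((\<lambda>\<omega>. norm (entropy_density 2 P Q (X \<omega>, Y \<omega>))) ` set_pmf \<mu>)"])
      (use finite_imageI[OF fin, of "\<lambda>p. norm (entropy_density 2 P Q p)"]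
        in \<open>auto simp: AE_measure_pmf_iff image_image\<close>)
  then have "integrable Q (entropy_density 2 P Q)"
    unfolding Q_def by (subst integrable_distr_eq) (auto simp: space_pair_measure pair_measure_countable[OF cX cY])
  then have "KL_divergence 2 P Q = 0 \<longleftrightarrow> Q = P"
    using joint_distr_absolutely_continuous[OF cX cY, of \<mu>]
    by (intro P.KL_eq_0_iff_eq_ac[OF Q _ sets]) (simp_all add: P_def Q_def)
  then show ?thesis
    unfolding prob_space.mutual_information_def[OF prob_space_measure_pmf]
    using pair_distr_eq_joint_distr_iff[OF cX cY, of \<mu>] by (auto simp: P_def Q_def)
qed

lemma mpow_downshift:
  "mpow q (downshift q) k = (\<lambda>j l. 1 \<le> l \<and> j = l + k \<and> j \<le> q)"
proof (induction k)
  case 0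
  then show ?case by (auto simp: mone_def fun_eq_iff)
next
  case (Suc k)
  have "{i \<in> {1..q}. downshift q j i \<and> mpow q (downshift q) k i l} =
      (if 2 \<le> j \<and> j \<le> q \<and> 1 \<le> l \<and> j = l + k + 1 then {j - 1} else {})" for j l
    unfolding Suc.IH by (auto simp: downshift_def)
  then show ?case
    by (auto simp: mmult_def fun_eq_iff)
qed

lemma mvmult_downshift_power:
  "mvmult q (mpow q (downshift q) k) x j = (1 \<le> j \<and> j \<le> q \<and> k < j \<and> x (j - k))"
proof -
  have "{l \<in> {1..q}. mpow q (downshift q) k j l \<and> x l} =
      (if 1 \<le> j \<and> j \<le> q \<and> k < j \<and> x (j - k) then {j - k} else {})"
    unfolding mpow_downshift by auto
  then show ?thesis
    by (auto simp: mvmult_def)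
qed

lemma Y1_weak_interference:
  "m < n \<Longrightarrow> Y1 m n N c \<omega>
    = map (\<lambda>t j. 1 \<le> j \<and> j \<le> n \<and> ((n - m < j \<and> x1 c \<omega> t (j - (n - m))) \<noteq> x2 c \<omega> t j)) [0..<N]"
  by (auto simp: Y1_def max_def vadd_def mvmult_downshift_power fun_eq_iff)

lemma Y2_weak_interference:
  "m < n \<Longrightarrow> Y2 m n N c \<omega> = map (\<lambda>t j. 1 \<le> j \<and> j \<le> n \<and> n - m < j \<and> x2 c \<omega> t (j - (n - m))) [0..<N]"
  by (simp add: Y2_def max_def mvmult_downshift_power fun_eq_iff)

definition vecs_on :: "nat set \<Rightarrow> f2vec set" where
  "vecs_on S = {v. \<forall>j. v j \<longrightarrow> j \<in> S}"

definition lists_of_len :: "nat \<Rightarrow> 'a set \<Rightarrow> 'a list set" where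
  "lists_of_len N A = {xs. set xs \<subseteq> A \<and> length xs = N}"

lemma finite_vecs_on: "finite S \<Longrightarrow> finite (vecs_on S)"
  and card_vecs_on: "finite S \<Longrightarrow> card (vecs_on S) = 2 ^ card S"
proof -
  have bij: "bij_betw (\<lambda>v. {j. v j}) (vecs_on S) (Pow S)"
    by (rule bij_betwI[where g="\<lambda>T j. j \<in> T"]) (auto simp: vecs_on_def)
  show "finite S \<Longrightarrow> finite (vecs_on S)"
    using bij_betw_finite[OF bij] by simp
  show "finite S \<Longrightarrow> card (vecs_on S) = 2 ^ card S"
    using bij_betw_same_card[OF bij] by (simp add: card_Pow)
qed

lemma finite_lists_of_len: "finite A \<Longrightarrow> finite (lists_of_len N A)"
  and card_lists_of_len: "finite A \<Longrightarrow> card (lists_of_len N A) = card A ^ N"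
  unfolding lists_of_len_def by (simp_all add: finite_lists_length_eq card_lists_length_eq)

lemma map_in_lists_of_len: "(\<And>t. t < N \<Longrightarrow> f t \<in> A) \<Longrightarrow> map f [0..<N] \<in> lists_of_len N A"
  by (auto simp: lists_of_len_def)

lemma finite_image_lists_of_vecs_on:
  "finite S \<Longrightarrow> (\<And>\<omega>. \<omega> \<in> A \<Longrightarrow> X \<omega> \<in> lists_of_len N (vecs_on S)) \<Longrightarrow> finite (X ` A)"
  by (rule finite_imageI_subset[of "lists_of_len N (vecs_on S)"])
    (simp_all add: finite_lists_of_len finite_vecs_on)

lemma entropy_rv_le_lists_of_vecs_on:
  assumes "finite S" "\<And>\<omega>. \<omega> \<in> set_pmf \<mu> \<Longrightarrow> X \<omega> \<in> lists_of_len N (vecs_on S)"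
  shows "entropy_rv \<mu> X \<le> real N * real (card S)"
proof -
  have "entropy_rv \<mu> X \<le> log 2 (card (lists_of_len N (vecs_on S)))"
    by (rule entropy_rv_le_log_card) (use assms in \<open>simp_all add: finite_lists_of_len finite_vecs_on\<close>)
  also have "\<dots> = real N * real (card S)"
    using assms by (simp add: card_lists_of_len card_vecs_on finite_vecs_on log_nat_power power_mult[symmetric])
  finally show ?thesis .
qed

lemma src_eq_pair_pmf:
  "src c = map_pmf (\<lambda>((w1, q1), (w2, q2)). (w1, w2, q1, q2))
     (pair_pmf (pair_pmf (pmf_of_set {..<M1 c}) (P1 c)) (pair_pmf (pmf_of_set {..<M2 c}) (P2 c)))"
proof -
  have "src c = do {w1 \<leftarrow> pmf_of_set {..<M1 c}; q1 \<leftarrow> P1 c; w2 \<leftarrow> pmf_of_set {..<M2 c}; q2 \<leftarrow> P2 c;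
      return_pmf (w1, w2, q1, q2)}"
    unfolding src_def by (rule bind_pmf_cong[OF refl], rule bind_commute_pmf)
  then show ?thesis
    by (simp add: pair_pmf_def map_bind_pmf bind_assoc_pmf bind_return_pmf)
qed

text \<open>An outcome \<open>\<omega>\<close> is \<open>(W1, W2, Q1, Q2)\<close>; functions of \<open>(W1, Q1)\<close> are independent of
  functions of \<open>(W2, Q2)\<close>.\<close>

lemma src_indep:
  "map_pmf (\<lambda>\<omega>. (F (W1v \<omega>, fst (snd (snd \<omega>))), G (W2v \<omega>, snd (snd (snd \<omega>))))) (src c) =
    pair_pmf (map_pmf (\<lambda>\<omega>. F (W1v \<omega>, fst (snd (snd \<omega>)))) (src c))
             (map_pmf (\<lambda>\<omega>. G (W2v \<omega>, snd (snd (snd \<omega>)))) (src c))"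
proof -
  define A where "A = pair_pmf (pmf_of_set {..<M1 c}) (P1 c)"
  define B where "B = pair_pmf (pmf_of_set {..<M2 c}) (P2 c)"
  have "map_pmf (\<lambda>\<omega>. (F (W1v \<omega>, fst (snd (snd \<omega>))), G (W2v \<omega>, snd (snd (snd \<omega>))))) (src c)
      = map_pmf (\<lambda>(a, b). (F a, G b)) (pair_pmf A B)"
    unfolding src_eq_pair_pmf A_def B_def map_pmf_comp by (simp add: split_def W1v_def W2v_def)
  also have "\<dots> = pair_pmf (map_pmf F (map_pmf fst (pair_pmf A B))) (map_pmf G (map_pmf snd (pair_pmf A B)))"
    by (simp add: map_pair map_fst_pair_pmf map_snd_pair_pmf)
  finally show ?thesis
    unfolding src_eq_pair_pmf A_def B_def map_pmf_comp by (simp add: split_def W1v_def W2v_def)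
qed

lemma set_pmf_src_messages:
  assumes "0 < M1 c" "0 < M2 c" "\<omega> \<in> set_pmf (src c)"
  shows "W1v \<omega> < M1 c" "W2v \<omega> < M2 c"
  using assms unfolding src_eq_pair_pmf by (auto simp: W1v_def W2v_def set_pmf_of_set lessThan_empty_iff)

lemma map_pmf_W1v_src: "0 < M1 c \<Longrightarrow> map_pmf W1v (src c) = pmf_of_set {..<M1 c}"
  and map_pmf_W2v_src: "0 < M2 c \<Longrightarrow> map_pmf W2v (src c) = pmf_of_set {..<M2 c}"
  unfolding src_eq_pair_pmf map_pmf_comp
  by (simp_all add: W1v_def W2v_def split_def map_fst_pair_pmf map_snd_pair_pmf flip: map_pmf_comp)

lemma countable_range_src_rv: "countable (range (X :: nat \<times> nat \<times> nat \<times> nat \<Rightarrow> 'a))"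
  by (rule countable_image) simp

locale weak_interference_code =
  fixes m n C N :: nat and c :: code
  assumes m_lt_n: "m < n" and n_lt_2m: "n < 2 * m"
    and M1_pos: "0 < M1 c" and M2_pos: "0 < M2 c"
    and link_lt: "\<And>t w2 q2. link c t w2 q2 < 2 ^ C"
    and W2_secret: "MI c W2v (Y1 m n N c) = 0"
begin

abbreviation H :: "(nat \<times> nat \<times> nat \<times> nat \<Rightarrow> 'a) \<Rightarrow> real" where
  "H X \<equiv> entropy_rv (src c) X"

definition "k = n - m"

definition "links \<omega> = map (\<lambda>s. link c s (W2v \<omega>) (snd (snd (snd \<omega>)))) [0..<N]"

text \<open>What receiver 1 gets from transmitter 2, and what it would get from transmitter 1 in
  response to each possible sequence of link messages (only those, so that \<open>x1_part\<close> has
  finitely many values).\<close>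

definition "x2_part \<omega> = map (\<lambda>t j. 1 \<le> j \<and> j \<le> n \<and> x2 c \<omega> t j) [0..<N]"

definition "x1_part \<omega> = (\<lambda>ls. if ls \<in> lists_of_len N {..<2 ^ C}
    then map (\<lambda>t j. 1 \<le> j \<and> j \<le> n \<and> k < j \<and> enc1 c t (W1v \<omega>) (fst (snd (snd \<omega>))) (take t ls) (j - k)) [0..<N]
    else undefined)"

text \<open>The levels \<open>1..k\<close> of \<open>y1\<close> carry only transmitter 2's signal; they reappear as levels
  \<open>k+1..2k\<close> of \<open>y2\<close>, whose remaining levels \<open>2k+1..n\<close> are private to receiver 2.\<close>

definition "y1_top \<omega> = map (\<lambda>v j. j \<le> k \<and> v j) (x2_part \<omega>)"
definition "y1_low \<omega> = map (\<lambda>v j. k < j \<and> v j) (Y1 m n N c \<omega>)"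
definition "y2_low \<omega> = map (\<lambda>v j. 2 * k < j \<and> v j) (Y2 m n N c \<omega>)"

lemma k_bounds: "0 < k" "2 * k < n" "card {k<..n} = m" "card {2 * k<..n} = 2 * m - n"
  using m_lt_n n_lt_2m by (auto simp: k_def)

lemma Y1_eq: "Y1 m n N c \<omega> = map2 vadd (x1_part \<omega> (links \<omega>)) (x2_part \<omega>)"
  and links_in: "links \<omega> \<in> lists_of_len N {..<2 ^ C}"
proof -
  show links_in: "links \<omega> \<in> lists_of_len N {..<2 ^ C}"
    unfolding links_def by (rule map_in_lists_of_len) (simp add: link_lt)
  obtain w1 w2 q1 q2 where "\<omega> = (w1, w2, q1, q2)" by (cases \<omega>)
  with links_in show "Y1 m n N c \<omega> = map2 vadd (x1_part \<omega> (links \<omega>)) (x2_part \<omega>)"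
    by (auto simp: Y1_weak_interference[OF m_lt_n] x1_part_def x2_part_def links_def map2_map_map
        x1_def W1v_def W2v_def take_map vadd_def k_def fun_eq_iff)
qed

lemma x2_part_eq: "x2_part \<omega> = map2 vadd (x1_part \<omega> (links \<omega>)) (Y1 m n N c \<omega>)"
proof -
  have "length (x1_part \<omega> (links \<omega>)) = length (x2_part \<omega>)"
    using links_in by (simp add: x1_part_def x2_part_def)
  then show ?thesis
    unfolding Y1_eq by (induction rule: list_induct2) (auto simp: vadd_def fun_eq_iff)
qed

lemma Y1_eq_top_low: "Y1 m n N c \<omega> = map2 (\<lambda>a v j. a j \<or> v j) (y1_top \<omega>) (y1_low \<omega>)"
  and y1_top_eq: "y1_top \<omega> = map (\<lambda>v j. j \<le> k \<and> v j) (Y1 m n N c \<omega>)"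
  by (auto simp: Y1_weak_interference[OF m_lt_n] y1_top_def y1_low_def x2_part_def map2_map_map k_def fun_eq_iff)

lemma Y2_eq_top_low: "Y2 m n N c \<omega> = map2 (\<lambda>a b j. (k < j \<and> j \<le> 2 * k \<and> a (j - k)) \<or> b j) (y1_top \<omega>) (y2_low \<omega>)"
  and y1_top_eq_Y2: "y1_top \<omega> = map (\<lambda>v j. j \<le> k \<and> v (j + k)) (Y2 m n N c \<omega>)"
  and y2_low_eq: "y2_low \<omega> = map (\<lambda>v j. 2 * k < j \<and> j \<le> n \<and> v (j - k)) (x2_part \<omega>)"
  using k_bounds
  by (auto simp: Y2_weak_interference[OF m_lt_n] y1_top_def y2_low_def x2_part_def map2_map_map k_def fun_eq_iff)

lemma Y1_in: "Y1 m n N c \<omega> \<in> lists_of_len N (vecs_on {1..n})"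
  and Y2_in: "Y2 m n N c \<omega> \<in> lists_of_len N (vecs_on {1..n})"
  and x2_part_in: "x2_part \<omega> \<in> lists_of_len N (vecs_on {1..n})"
  and y1_top_in: "y1_top \<omega> \<in> lists_of_len N (vecs_on {1..n})"
  and y1_low_in: "y1_low \<omega> \<in> lists_of_len N (vecs_on {k<..n})"
  and y2_low_in: "y2_low \<omega> \<in> lists_of_len N (vecs_on {2 * k<..n})"
  and x1_part_in: "x1_part \<omega> \<in> lists_of_len N {..<2 ^ C} \<rightarrow>\<^sub>E lists_of_len N (vecs_on {1..n})"
  by (auto simp: Y1_weak_interference[OF m_lt_n] Y2_weak_interference[OF m_lt_n] x2_part_def
      y1_top_def y1_low_def y2_low_def x1_part_def lists_of_len_def vecs_on_def PiE_def extensional_def)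

lemma finite_ranges [simp]:
  "finite (W1v ` set_pmf (src c))" "finite (W2v ` set_pmf (src c))"
  "finite (Y1 m n N c ` set_pmf (src c))" "finite (Y2 m n N c ` set_pmf (src c))"
  "finite (x2_part ` set_pmf (src c))" "finite (x1_part ` set_pmf (src c))" "finite (links ` set_pmf (src c))"
  "finite (y1_top ` set_pmf (src c))" "finite (y1_low ` set_pmf (src c))" "finite (y2_low ` set_pmf (src c))"
proof -
  have fin: "finite (lists_of_len N (vecs_on S))" if "finite S" for S
    using that by (simp add: finite_lists_of_len finite_vecs_on)
  show "finite (W1v ` set_pmf (src c))" "finite (W2v ` set_pmf (src c))"
    using set_pmf_src_messages[OF M1_pos M2_pos]
    by (auto intro: finite_imageI_subset[OF finite_lessThan[of "M1 c"]]
        finite_imageI_subset[OF finite_lessThan[of "M2 c"]])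
  show "finite (Y1 m n N c ` set_pmf (src c))"
    by (rule finite_image_lists_of_vecs_on[OF _ Y1_in]) simp
  show "finite (Y2 m n N c ` set_pmf (src c))"
    by (rule finite_image_lists_of_vecs_on[OF _ Y2_in]) simp
  show "finite (x2_part ` set_pmf (src c))"
    by (rule finite_image_lists_of_vecs_on[OF _ x2_part_in]) simp
  show "finite (y1_top ` set_pmf (src c))"
    by (rule finite_image_lists_of_vecs_on[OF _ y1_top_in]) simp
  show "finite (y1_low ` set_pmf (src c))"
    by (rule finite_image_lists_of_vecs_on[OF _ y1_low_in]) simp
  show "finite (y2_low ` set_pmf (src c))"
    by (rule finite_image_lists_of_vecs_on[OF _ y2_low_in]) simp
  show "finite (x1_part ` set_pmf (src c))"
    by (rule finite_imageI_subset[OF _ x1_part_in]) (simp add: finite_PiE finite_lists_of_len fin)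
  show "finite (links ` set_pmf (src c))"
    by (rule finite_imageI_subset[OF _ links_in]) (simp add: finite_lists_of_len)
qed

lemma entropy_W1v: "H W1v = log 2 (M1 c)"
  and entropy_W2v: "H W2v = log 2 (M2 c)"
  using M1_pos M2_pos
  by (simp_all add: entropy_rv_def map_pmf_W1v_src map_pmf_W2v_src entropy_pmf_of_set lessThan_empty_iff)

lemma entropy_y1_low: "H y1_low \<le> real N * real m"
proof -
  have "H y1_low \<le> real N * real (card {k<..n})"
    by (rule entropy_rv_le_lists_of_vecs_on) (simp_all add: y1_low_in)
  then show ?thesis
    unfolding k_bounds(3) .
qed

lemma entropy_y2_low: "H y2_low \<le> real N * (2 * real m - real n)"
proof -
  have "H y2_low \<le> real N * real (card {2 * k<..n})"
    by (rule entropy_rv_le_lists_of_vecs_on) (simp_all add: y2_low_in)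
  then show ?thesis
    unfolding k_bounds(4) using n_lt_2m by (simp add: of_nat_diff)
qed

lemma entropy_links: "H links \<le> real N * real C"
proof -
  have "H links \<le> log 2 (card (lists_of_len N {..<(2::nat) ^ C}))"
    by (rule entropy_rv_le_log_card) (simp_all add: finite_lists_of_len links_in)
  also have "\<dots> = real N * real C"
    by (simp add: card_lists_of_len log_nat_power power_mult[symmetric] mult.commute)
  finally show ?thesis .
qed

lemma fano_Y1: "H (\<lambda>\<omega>. (W1v \<omega>, Y1 m n N c \<omega>)) - H (Y1 m n N c) \<le> 1 + err_prob m n N c * log 2 (M1 c)"
proof -
  have "H (\<lambda>\<omega>. (W1v \<omega>, Y1 m n N c \<omega>)) - H (Y1 m n N c)
      \<le> 1 + measure (src c) {\<omega>. dec1 c (Y1 m n N c \<omega>) \<noteq> W1v \<omega>} * log 2 (M1 c)"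
    by (rule entropy_rv_fano[where A="{..<M1 c}"]) (simp_all add: set_pmf_src_messages[OF M1_pos M2_pos])
  also have "\<dots> \<le> 1 + err_prob m n N c * log 2 (M1 c)"
    unfolding err_prob_def using M1_pos
    by (intro add_left_mono mult_right_mono measure_pmf.finite_measure_mono) auto
  finally show ?thesis .
qed

lemma fano_Y2: "H (\<lambda>\<omega>. (W2v \<omega>, Y2 m n N c \<omega>)) - H (Y2 m n N c) \<le> 1 + err_prob m n N c * log 2 (M2 c)"
proof -
  have "H (\<lambda>\<omega>. (W2v \<omega>, Y2 m n N c \<omega>)) - H (Y2 m n N c)
      \<le> 1 + measure (src c) {\<omega>. dec2 c (Y2 m n N c \<omega>) \<noteq> W2v \<omega>} * log 2 (M2 c)"
    by (rule entropy_rv_fano[where A="{..<M2 c}"]) (simp_all add: set_pmf_src_messages[OF M1_pos M2_pos])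
  also have "\<dots> \<le> 1 + err_prob m n N c * log 2 (M2 c)"
    unfolding err_prob_def using M2_pos
    by (intro add_left_mono mult_right_mono measure_pmf.finite_measure_mono) auto
  finally show ?thesis .
qed

lemma tx1_tx2_indep:
  "map_pmf (\<lambda>\<omega>. ((W1v \<omega>, x1_part \<omega>), (x2_part \<omega>, links \<omega>))) (src c) =
    pair_pmf (map_pmf (\<lambda>\<omega>. (W1v \<omega>, x1_part \<omega>)) (src c)) (map_pmf (\<lambda>\<omega>. (x2_part \<omega>, links \<omega>)) (src c))"
proof -
  define F where "F = (\<lambda>(w1, q1). (w1, \<lambda>ls. if ls \<in> lists_of_len N {..<2 ^ C}
    then map (\<lambda>t j. 1 \<le> j \<and> j \<le> n \<and> k < j \<and> enc1 c t w1 q1 (take t ls) (j - k)) [0..<N] else undefined))"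
  define G where "G = (\<lambda>(w2, q2). (map (\<lambda>t j. 1 \<le> j \<and> j \<le> n \<and> enc2 c t w2 q2 j) [0..<N],
    map (\<lambda>s. link c s w2 q2) [0..<N]))"
  have "(W1v \<omega>, x1_part \<omega>) = F (W1v \<omega>, fst (snd (snd \<omega>)))" for \<omega>
    by (simp add: F_def x1_part_def)
  moreover have "(x2_part \<omega>, links \<omega>) = G (W2v \<omega>, snd (snd (snd \<omega>)))" for \<omega>
    by (cases \<omega>) (simp add: G_def x2_part_def links_def x2_def W2v_def)
  ultimately show ?thesis
    by (simp only: src_indep)
qed

lemma W1v_x2_part_indep:
  "map_pmf (\<lambda>\<omega>. (W1v \<omega>, x2_part \<omega>)) (src c) = pair_pmf (map_pmf W1v (src c)) (map_pmf x2_part (src c))"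
proof -
  have "map_pmf (\<lambda>\<omega>. (W1v \<omega>, x2_part \<omega>)) (src c) = map_pmf (\<lambda>(a, b). (fst a, fst b))
      (map_pmf (\<lambda>\<omega>. ((W1v \<omega>, x1_part \<omega>), (x2_part \<omega>, links \<omega>))) (src c))"
    by (simp add: map_pmf_comp)
  also have "\<dots> = pair_pmf (map_pmf W1v (src c)) (map_pmf x2_part (src c))"
    unfolding tx1_tx2_indep map_pair by (simp add: map_pmf_comp)
  finally show ?thesis .
qed

lemma W2v_y1_top_indep:
  "map_pmf (\<lambda>\<omega>. (W2v \<omega>, y1_top \<omega>)) (src c) = pair_pmf (map_pmf W2v (src c)) (map_pmf y1_top (src c))"
proof -
  have "map_pmf (\<lambda>\<omega>. (W2v \<omega>, Y1 m n N c \<omega>)) (src c) = pair_pmf (map_pmf W2v (src c)) (map_pmf (Y1 m n N c) (src c))"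
    using W2_secret unfolding MI_def
    by (subst (asm) mutual_information_pmf_eq_0_iff) (simp_all add: countable_range_src_rv finite_image_pair)
  then have "map_pmf (apsnd (map (\<lambda>v j. j \<le> k \<and> v j))) (map_pmf (\<lambda>\<omega>. (W2v \<omega>, Y1 m n N c \<omega>)) (src c)) =
      pair_pmf (map_pmf W2v (src c)) (map_pmf (map (\<lambda>v j. j \<le> k \<and> v j)) (map_pmf (Y1 m n N c) (src c)))"
    by (simp add: pair_map_pmf2)
  then show ?thesis
    by (simp add: map_pmf_comp y1_top_eq[symmetric])
qed

text \<open>\<open>I(W1; y1) \<le> H(y1_low)\<close>: knowing \<open>x2_part\<close>, which is independent of \<open>W1\<close>, only the low
  levels of \<open>y1\<close> remain uncertain.\<close>

lemma information_W1v_Y1_le: "H W1v + H (Y1 m n N c) - H (\<lambda>\<omega>. (W1v \<omega>, Y1 m n N c \<omega>)) \<le> real N * real m"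
proof -
  let ?y1 = "Y1 m n N c"
  have "H (\<lambda>\<omega>. (?y1 \<omega>, W1v \<omega>, x2_part \<omega>)) + H ?y1 \<le> H (\<lambda>\<omega>. (?y1 \<omega>, W1v \<omega>)) + H (\<lambda>\<omega>. (?y1 \<omega>, x2_part \<omega>))"
    by (rule entropy_rv_strong_subadditive) simp_all
  moreover have "H (\<lambda>\<omega>. (?y1 \<omega>, W1v \<omega>)) = H (\<lambda>\<omega>. (W1v \<omega>, ?y1 \<omega>))"
    by (rule entropy_rv_function_eq[where f=prod.swap and g=prod.swap]) (simp_all add: finite_image_pair)
  moreover have "H W1v + H x2_part = H (\<lambda>\<omega>. (W1v \<omega>, x2_part \<omega>))"
    by (rule entropy_rv_pair_indep[symmetric]) (simp_all add: W1v_x2_part_indep)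
  moreover have "H (\<lambda>\<omega>. (W1v \<omega>, x2_part \<omega>)) \<le> H (\<lambda>\<omega>. (?y1 \<omega>, W1v \<omega>, x2_part \<omega>))"
    by (rule entropy_rv_function_le[where f=snd]) (simp_all add: finite_image_pair)
  moreover have "H (\<lambda>\<omega>. (?y1 \<omega>, x2_part \<omega>)) \<le> H (\<lambda>\<omega>. (y1_low \<omega>, x2_part \<omega>))"
    by (rule entropy_rv_function_le[where f="\<lambda>(v, z). (map2 (\<lambda>a v j. a j \<or> v j) (map (\<lambda>v j. j \<le> k \<and> v j) z) v, z)"])
      (simp_all add: finite_image_pair Y1_eq_top_low y1_top_def)
  moreover have "H (\<lambda>\<omega>. (y1_low \<omega>, x2_part \<omega>)) \<le> H y1_low + H x2_part"
    by (rule entropy_rv_pair_le) simp_all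
  ultimately show ?thesis
    using entropy_y1_low by linarith
qed

lemma information_W2v_Y2_le:
  "H W2v + H (Y2 m n N c) - H (\<lambda>\<omega>. (W2v \<omega>, Y2 m n N c \<omega>)) \<le> H (\<lambda>\<omega>. (y1_top \<omega>, y2_low \<omega>)) - H y1_top"
proof -
  have "H (Y2 m n N c) = H (\<lambda>\<omega>. (y1_top \<omega>, y2_low \<omega>))"
    by (rule entropy_rv_function_eq[where f="\<lambda>(a, b). map2 (\<lambda>a b j. (k < j \<and> j \<le> 2 * k \<and> a (j - k)) \<or> b j) a b"
          and g="\<lambda>v. (map (\<lambda>v j. j \<le> k \<and> v (j + k)) v, map (\<lambda>v j. 2 * k < j \<and> v j) v)"])
      (simp add: finite_image_pair, simp add: Y2_eq_top_low, simp only: y1_top_eq_Y2 y2_low_def)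
  moreover have "H (\<lambda>\<omega>. (W2v \<omega>, y1_top \<omega>)) \<le> H (\<lambda>\<omega>. (W2v \<omega>, Y2 m n N c \<omega>))"
    by (rule entropy_rv_function_le[where f="\<lambda>(w, v). (w, map (\<lambda>v j. j \<le> k \<and> v (j + k)) v)"])
      (simp_all add: finite_image_pair y1_top_eq_Y2[symmetric])
  moreover have "H (\<lambda>\<omega>. (W2v \<omega>, y1_top \<omega>)) = H W2v + H y1_top"
    by (rule entropy_rv_pair_indep) (simp_all add: W2v_y1_top_indep)
  ultimately show ?thesis by linarith
qed

text \<open>The sum-rate bound: receiver 1 could rebuild \<open>x2_part\<close> from \<open>y1\<close>, \<open>W1\<close>, the response map
  \<open>x1_part\<close> and the link messages; hence \<open>I(W1; y1)\<close> is paid for by the link and by the part of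
  transmitter 2's signal that receiver 2 does not see privately.\<close>

lemma information_W1v_Y1_le_sum:
  "H W1v + H (Y1 m n N c) - H (\<lambda>\<omega>. (W1v \<omega>, Y1 m n N c \<omega>))
    \<le> H y1_top - H (\<lambda>\<omega>. (y1_top \<omega>, y2_low \<omega>)) + real N * real m + real N * real C"
proof -
  let ?y1 = "Y1 m n N c"
  have "H ?y1 \<le> H (\<lambda>\<omega>. (y1_top \<omega>, y1_low \<omega>))"
    by (rule entropy_rv_function_le[where f="\<lambda>(a, v). map2 (\<lambda>a v j. a j \<or> v j) a v"])
      (simp_all add: finite_image_pair Y1_eq_top_low)
  moreover have "H (\<lambda>\<omega>. (y1_top \<omega>, y1_low \<omega>)) \<le> H y1_top + H y1_low"
    by (rule entropy_rv_pair_le) simp_all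
  moreover have "H (\<lambda>\<omega>. (W1v \<omega>, ?y1 \<omega>, x1_part \<omega>)) + H W1v
      \<le> H (\<lambda>\<omega>. (W1v \<omega>, ?y1 \<omega>)) + H (\<lambda>\<omega>. (W1v \<omega>, x1_part \<omega>))"
    by (rule entropy_rv_strong_subadditive) simp_all
  moreover have "H (\<lambda>\<omega>. ((W1v \<omega>, ?y1 \<omega>, x1_part \<omega>), links \<omega>)) \<le> H (\<lambda>\<omega>. (W1v \<omega>, ?y1 \<omega>, x1_part \<omega>)) + H links"
    by (rule entropy_rv_pair_le) (simp_all add: finite_image_pair)
  moreover have "H (\<lambda>\<omega>. ((W1v \<omega>, ?y1 \<omega>, x1_part \<omega>), links \<omega>))
      = H (\<lambda>\<omega>. ((W1v \<omega>, x1_part \<omega>), (x2_part \<omega>, links \<omega>)))"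
    by (rule entropy_rv_function_eq[where f="\<lambda>((w, p), (z, l)). ((w, map2 vadd (p l) z, p), l)"
          and g="\<lambda>((w, y, p), l). ((w, p), (map2 vadd (p l) y, l))"])
      (simp_all add: finite_image_pair flip: Y1_eq x2_part_eq)
  moreover have "H (\<lambda>\<omega>. ((W1v \<omega>, x1_part \<omega>), (x2_part \<omega>, links \<omega>)))
      = H (\<lambda>\<omega>. (W1v \<omega>, x1_part \<omega>)) + H (\<lambda>\<omega>. (x2_part \<omega>, links \<omega>))"
    by (rule entropy_rv_pair_indep) (simp_all add: finite_image_pair tx1_tx2_indep)
  moreover have "H (\<lambda>\<omega>. (y1_top \<omega>, y2_low \<omega>)) \<le> H (\<lambda>\<omega>. (x2_part \<omega>, links \<omega>))"
    by (rule entropy_rv_function_le[where f="\<lambda>(z, l). (map (\<lambda>v j. j \<le> k \<and> v j) z,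
          map (\<lambda>v j. 2 * k < j \<and> j \<le> n \<and> v (j - k)) z)"])
      (simp_all add: finite_image_pair y1_top_def y2_low_eq)
  ultimately show ?thesis
    using entropy_y1_low entropy_links by linarith
qed

theorem converse_bounds:
  defines "Pe \<equiv> err_prob m n N c"
  shows "log 2 (M1 c) \<le> real N * real m + 1 + Pe * log 2 (M1 c)"
    and "log 2 (M2 c) \<le> real N * (2 * real m - real n) + 1 + Pe * log 2 (M2 c)"
    and "log 2 (M1 c) + log 2 (M2 c)
      \<le> real N * (real m + real C) + 2 + Pe * (log 2 (M1 c) + log 2 (M2 c))"
proof -
  have "H (\<lambda>\<omega>. (y1_top \<omega>, y2_low \<omega>)) \<le> H y1_top + H y2_low"
    by (rule entropy_rv_pair_le) simp_all
  then show "log 2 (M1 c) \<le> real N * real m + 1 + Pe * log 2 (M1 c)"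
    and "log 2 (M2 c) \<le> real N * (2 * real m - real n) + 1 + Pe * log 2 (M2 c)"
    and "log 2 (M1 c) + log 2 (M2 c)
      \<le> real N * (real m + real C) + 2 + Pe * (log 2 (M1 c) + log 2 (M2 c))"
    using information_W1v_Y1_le information_W2v_Y2_le information_W1v_Y1_le_sum
      fano_Y1 fano_Y2 entropy_W1v entropy_W2v entropy_y2_low
    unfolding Pe_def by (simp_all add: algebra_simps)
qed

end

lemma log_nat_ceiling_powr_ge: "x \<le> log 2 (real (nat \<lceil>2 powr x\<rceil>))"
proof -
  have "0 < \<lceil>2 powr x\<rceil>"
    by simp
  then have "2 powr x \<le> real (nat \<lceil>2 powr x\<rceil>)"
    using le_of_int_ceiling[of "2 powr x"] by simp
  then have "log 2 (2 powr x) \<le> log 2 (real (nat \<lceil>2 powr x\<rceil>))"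
    by (intro log_le_cancel_iff[THEN iffD2]) auto
  then show ?thesis by simp
qed

lemma rate_le_of_fano_bound:
  fixes Pe L :: "nat \<Rightarrow> real" and R b K :: real
  assumes lim: "Pe \<longlonglongrightarrow> 0" and Pe: "\<And>N. 0 \<le> Pe N \<and> Pe N \<le> 1"
    and low: "\<And>N. real N * R \<le> L N" and up: "\<And>N. L N \<le> real N * b + K + Pe N * L N"
  shows "R \<le> b"
proof -
  have pointwise: "(1 - Pe N) * R \<le> b + K / real N" if "1 \<le> N" for N
  proof -
    have "(1 - Pe N) * (real N * R) \<le> (1 - Pe N) * L N"
      using Pe[of N] low[of N] by (intro mult_left_mono) auto
    also have "\<dots> \<le> real N * b + K"
      using up[of N] by (simp add: algebra_simps)
    finally have "real N * ((1 - Pe N) * R) \<le> real N * (b + K / real N)"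
      using that by (simp add: algebra_simps)
    then show ?thesis
      using that by (simp add: mult_le_cancel_left)
  qed
  have "(\<lambda>N. (1 - Pe N) * R) \<longlonglongrightarrow> (1 - 0) * R"
    by (intro tendsto_intros lim)
  moreover have "(\<lambda>N. b + K / real N) \<longlonglongrightarrow> b + 0"
    by (intro tendsto_intros tendsto_divide_0[OF tendsto_const] filterlim_real_sequentially)
  ultimately have "(1 - 0) * R \<le> b + 0"
    by (rule LIMSEQ_le) (use pointwise in blast)
  then show ?thesis by simp
qed

theorem achievable_imp_bounds:
  assumes "m < n" "n < 2 * m" and ach: "achievable m n C (R1, R2)"
  shows "R1 \<le> real m" "R2 \<le> 2 * real m - real n" "R1 + R2 \<le> real m + real C"
proof -
  obtain cs where sc: "\<And>N. secure_code m n C N R1 R2 (cs N)"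
    and lim: "(\<lambda>N. err_prob m n N (cs N)) \<longlonglongrightarrow> 0"
    using ach unfolding achievable_def by auto
  define Pe where "Pe N = err_prob m n N (cs N)" for N
  have Pe: "0 \<le> Pe N \<and> Pe N \<le> 1" for N
    unfolding Pe_def err_prob_def by auto
  have M: "M1 (cs N) = nat \<lceil>2 powr (real N * R1)\<rceil>" "M2 (cs N) = nat \<lceil>2 powr (real N * R2)\<rceil>" for N
    using sc[of N] by (auto simp: secure_code_def)
  have "weak_interference_code m n C N (cs N)" for N
    using assms sc[of N] by unfold_locales (auto simp: secure_code_def)
  note bounds = weak_interference_code.converse_bounds[OF this, folded Pe_def]
  show "R1 \<le> real m"
  proof (rule rate_le_of_fano_bound[OF lim[folded Pe_def] Pe, where L="\<lambda>N. log 2 (M1 (cs N))" and K=1])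
    show "real N * R1 \<le> log 2 (M1 (cs N))" for N
      unfolding M by (rule log_nat_ceiling_powr_ge)
  qed (rule bounds(1))
  show "R2 \<le> 2 * real m - real n"
  proof (rule rate_le_of_fano_bound[OF lim[folded Pe_def] Pe, where L="\<lambda>N. log 2 (M2 (cs N))" and K=1])
    show "real N * R2 \<le> log 2 (M2 (cs N))" for N
      unfolding M by (rule log_nat_ceiling_powr_ge)
  qed (rule bounds(2))
  show "R1 + R2 \<le> real m + real C"
  proof (rule rate_le_of_fano_bound[OF lim[folded Pe_def] Pe,
        where L="\<lambda>N. log 2 (M1 (cs N)) + log 2 (M2 (cs N))" and K=2])
    show "real N * (R1 + R2) \<le> log 2 (M1 (cs N)) + log 2 (M2 (cs N))" for N
      using log_nat_ceiling_powr_ge[of "real N * R1"] log_nat_ceiling_powr_ge[of "real N * R2"]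
      unfolding M distrib_left by (rule add_mono)
  qed (rule bounds(3))
qed

definition prefix_sum :: "(nat \<Rightarrow> nat) \<Rightarrow> nat \<Rightarrow> nat" where
  "prefix_sum f t = (\<Sum>s<t. f s)"

lemma prefix_sum_Suc: "prefix_sum f (Suc t) = prefix_sum f t + f t"
  by (simp add: prefix_sum_def)

lemma prefix_sum_mono: "s \<le> t \<Longrightarrow> prefix_sum f s \<le> prefix_sum f t"
  unfolding prefix_sum_def by (rule sum_mono2) auto

lemma prefix_sum_slot_less: "t < N \<Longrightarrow> i < f t \<Longrightarrow> prefix_sum f t + i < prefix_sum f N"
  using prefix_sum_mono[of "Suc t" N f] by (simp add: prefix_sum_Suc)

lemma prefix_sum_cover:
  "b < prefix_sum f N \<Longrightarrow> \<exists>t<N. prefix_sum f t \<le> b \<and> b < prefix_sum f t + f t"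
proof (induction N)
  case 0
  then show ?case by (simp add: prefix_sum_def)
next
  case (Suc N)
  then show ?case
    by (cases "b < prefix_sum f N") (auto simp: prefix_sum_Suc intro: less_SucI)
qed

lemma nat_eq_if_low_bits_eq:
  fixes w w' :: nat
  assumes "w < 2 ^ b" "w' < 2 ^ b" "\<And>i. i < b \<Longrightarrow> bit w i = bit w' i"
  shows "w = w'"
proof -
  have "take_bit b w = take_bit b w'"
    by (rule bit_eq_iff[THEN iffD2]) (auto simp: bit_take_bit_iff assms(3))
  then show ?thesis
    using assms(1,2) by (simp add: take_bit_nat_eq_self_iff[THEN iffD2])
qed

lemma eq_if_slot_bits_eq:
  fixes w w' :: nat
  assumes "w < 2 ^ ((N - 1) * e + prefix_sum f N)" "w' < 2 ^ ((N - 1) * e + prefix_sum f N)" "f 0 = 0"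
    and first: "\<And>t i. 1 \<le> t \<Longrightarrow> t < N \<Longrightarrow> i < e \<Longrightarrow> bit w ((t - 1) * e + i) = bit w' ((t - 1) * e + i)"
    and second: "\<And>t i. 1 \<le> t \<Longrightarrow> t < N \<Longrightarrow> i < f t \<Longrightarrow>
      bit w ((N - 1) * e + prefix_sum f t + i) = bit w' ((N - 1) * e + prefix_sum f t + i)"
  shows "w = w'"
proof (rule nat_eq_if_low_bits_eq[OF assms(1,2)])
  fix b assume b: "b < (N - 1) * e + prefix_sum f N"
  show "bit w b = bit w' b"
  proof (cases "b < (N - 1) * e")
    case True
    then have "0 < e"
      by (cases "e = 0") auto
    with True have "b div e < N - 1"
      by (simp add: div_less_iff_less_mult)
    then show ?thesis
      using first[of "b div e + 1" "b mod e"] \<open>0 < e\<close> by simp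
  next
    case False
    with b have "b - (N - 1) * e < prefix_sum f N"
      by linarith
    then obtain t where t: "t < N" "prefix_sum f t \<le> b - (N - 1) * e" "b - (N - 1) * e < prefix_sum f t + f t"
      using prefix_sum_cover by blast
    moreover have "1 \<le> t"
      using t assms(3) by (cases t) (auto simp: prefix_sum_def)
    ultimately show ?thesis
      using second[of t "b - (N - 1) * e - prefix_sum f t"] False by simp
  qed
qed

lemma xor_less_power2: "(q :: nat) < 2 ^ Z \<Longrightarrow> d < 2 ^ Z \<Longrightarrow> xor q d < 2 ^ Z"
  by (metis take_bit_nat_eq_self_iff take_bit_xor)

lemma xor_xor_cancel: "xor (xor (q :: nat) d) d = q"
  by (rule bit_eq_iff[THEN iffD2]) (auto simp: bit_xor_iff)

lemma map_pmf_xor_uniform: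
  assumes "(d :: nat) < 2 ^ Z"
  shows "map_pmf (\<lambda>q. xor q d) (pmf_of_set {..<2 ^ Z}) = pmf_of_set {..<2 ^ Z}"
proof -
  have "inj_on (\<lambda>q. xor q d) {..<2 ^ Z}"
    by (rule inj_on_inverseI[where g="\<lambda>q. xor q d"]) (simp add: xor_xor_cancel)
  moreover have "(\<lambda>q. xor q d) ` {..<2 ^ Z} = {..<2 ^ Z}"
    using assms xor_less_power2 by (force intro: image_eqI[where x="xor q d" for q] simp: xor_xor_cancel)
  ultimately show ?thesis
    using map_pmf_of_set_inj[of "\<lambda>q. xor q d" "{..<2 ^ Z}"] by (simp add: lessThan_empty_iff)
qed

lemma map_pmf_src_xor_key:
  assumes "\<And>w2. d w2 < 2 ^ Z" and "P1 c = pmf_of_set {..<2 ^ Z}"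
  shows "map_pmf (\<lambda>(w1, w2, q1, q2). (w1, w2, xor q1 (d w2), q2)) (src c) = src c"
proof -
  have "map_pmf (\<lambda>(w1, w2, q1, q2). (w1, w2, xor q1 (d w2), q2)) (src c) = do {
      w1 \<leftarrow> pmf_of_set {..<M1 c}; w2 \<leftarrow> pmf_of_set {..<M2 c};
      q1 \<leftarrow> map_pmf (\<lambda>q. xor q (d w2)) (P1 c); q2 \<leftarrow> P2 c; return_pmf (w1, w2, q1, q2)}"
    unfolding src_def by (simp add: map_bind_pmf bind_map_pmf)
  also have "\<dots> = src c"
    unfolding src_def assms(2) using map_pmf_xor_uniform[OF assms(1)] by simp
  finally show ?thesis .
qed

lemma nat_ceiling_powr_le_power2:
  "x \<le> real b \<Longrightarrow> nat \<lceil>2 powr x\<rceil> \<le> 2 ^ b"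
  by (simp add: nat_le_iff ceiling_le_iff powr_realpow[symmetric])

lemma Y1_in_lists_of_len: "Y1 m n N c \<omega> \<in> lists_of_len N (vecs_on {1..max m n})"
  and Y2_in_lists_of_len: "Y2 m n N c \<omega> \<in> lists_of_len N (vecs_on {1..max m n})"
  by (auto simp: Y1_def Y2_def Let_def lists_of_len_def vecs_on_def vadd_def mvmult_def)

lemma MI_eq_0_of_indep:
  assumes "finite (X ` set_pmf (src c))" "finite (Y ` set_pmf (src c))"
    and "map_pmf (\<lambda>\<omega>. (X \<omega>, Y \<omega>)) (src c) = pair_pmf (map_pmf X (src c)) (map_pmf Y (src c))"
  shows "MI c X Y = 0"
  unfolding MI_def using assms
  by (subst mutual_information_pmf_eq_0_iff) (simp_all add: countable_range_src_rv finite_image_pair)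

text \<open>The coding scheme for block length \<open>N\<close> (slot \<open>0\<close> is idle, since link messages arrive
  one slot late). With \<open>k = n - m\<close>, in slot \<open>t \<ge> 1\<close>:
  \<^item> transmitter 2 puts \<open>e\<close> bits of \<open>W2\<close> on its levels \<open>k+1..k+e\<close>, having sent them over the
    link in slot \<open>t - 1\<close>; transmitter 1 xors them into its levels \<open>1..e\<close>, so they cancel at
    receiver 1;
  \<^item> if \<open>t \<ge> T0\<close>, transmitter 2 adds \<open>J\<close> private bits of \<open>W2\<close> on levels \<open>k+e+1..k+e+J\<close>, which
    transmitter 1 jams at receiver 1 with fresh key bits on its levels \<open>e+1..e+J\<close>;
  \<^item> transmitter 1 fills its remaining levels with fresh bits of \<open>W1\<close>.
  Levels \<open>1..k\<close> of transmitter 2, which reach receiver 1 without interference from transmitter 1,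
  stay silent.\<close>

locale time_sharing_scheme =
  fixes m n C N T0 M1n M2n :: nat
  assumes m_lt_n: "m < n" and n_lt_2m: "n < 2 * m"
begin

definition "k = n - m"
definition "e = min C (2 * m - n)"
definition "J = 2 * m - n - e"
definition "jam s = (if 1 \<le> s \<and> T0 \<le> s then J else 0)"
definition "fresh s = (if 1 \<le> s then m - e - jam s else 0)"
definition "link_bits = (N - 1) * e"
definition "key_bits = prefix_sum jam N"

text \<open>Bit layout of the messages: \<open>W2\<close> has its link bits first, then its private bits; \<open>W1\<close> has
  the bits cancelling the link first, then its fresh bits; the key \<open>Q1\<close> has \<open>key_bits\<close> bits.\<close>

definition "private_bits w2 = take_bit key_bits (drop_bit link_bits w2)"

definition "link_sig s w2 = take_bit e (drop_bit (s * e) w2)"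

definition x2_sig :: "nat \<Rightarrow> nat \<Rightarrow> f2vec" where
  "x2_sig w2 t = (\<lambda>p. 1 \<le> t \<and> ((k < p \<and> p \<le> k + e \<and> bit w2 ((t - 1) * e + (p - k - 1))) \<or>
      (k + e < p \<and> p \<le> k + e + jam t \<and> bit w2 (link_bits + prefix_sum jam t + (p - k - e - 1)))))"

definition x1_sig :: "nat \<Rightarrow> nat \<Rightarrow> nat list \<Rightarrow> nat \<Rightarrow> f2vec" where
  "x1_sig w1 q1 ls t = (\<lambda>p. 1 \<le> t \<and>
     ((1 \<le> p \<and> p \<le> e \<and> (bit w1 ((t - 1) * e + (p - 1)) \<noteq> bit (ls ! (t - 1)) (p - 1))) \<or>
      (e < p \<and> p \<le> e + jam t \<and> bit q1 (prefix_sum jam t + (p - e - 1))) \<or>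
      (e + jam t < p \<and> p \<le> m \<and> bit w1 (link_bits + prefix_sum fresh t + (p - e - jam t - 1)))))"

definition y1_sig :: "nat \<Rightarrow> nat \<Rightarrow> nat \<Rightarrow> f2vec" where
  "y1_sig w1 r t = (\<lambda>j. 1 \<le> t \<and> ((k < j \<and> j \<le> k + e \<and> bit w1 ((t - 1) * e + (j - k - 1))) \<or>
      (k + e < j \<and> j \<le> k + e + jam t \<and> bit r (prefix_sum jam t + (j - k - e - 1))) \<or>
      (k + e + jam t < j \<and> j \<le> n \<and> bit w1 (link_bits + prefix_sum fresh t + (j - k - e - jam t - 1)))))"

lemma params: "0 < k" "e \<le> C" "k + e + J = m" "2 * k + e + J = n" "jam s \<le> J"
  using m_lt_n n_lt_2m by (auto simp: k_def e_def J_def jam_def)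

lemma bit_link_sig: "bit (link_sig s w2) i = (i < e \<and> bit w2 (s * e + i))"
  by (simp add: link_sig_def bit_take_bit_iff bit_drop_bit_eq)

lemma bit_private_bits: "bit (private_bits w2) b = (b < key_bits \<and> bit w2 (link_bits + b))"
  by (simp add: private_bits_def bit_take_bit_iff bit_drop_bit_eq)

lemma y1_slot_cancelled:
  assumes "1 \<le> t" "ls ! (t - 1) = link_sig (t - 1) w2" "k < j" "j \<le> k + e"
  shows "(1 \<le> j \<and> j \<le> n \<and> ((k < j \<and> x1_sig w1 q1 ls t (j - k)) \<noteq> x2_sig w2 t j)) = y1_sig w1 r t j"
proof -
  define i where "i = j - k - 1"
  have j: "j = k + 1 + i" "i < e"
    using assms(3,4) unfolding i_def by linarith+
  have "x1_sig w1 q1 ls t (j - k) = (bit w1 ((t - 1) * e + i) \<noteq> bit w2 ((t - 1) * e + i))"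
    using j assms(1,2) by (simp add: x1_sig_def bit_link_sig)
  moreover have "x2_sig w2 t j = bit w2 ((t - 1) * e + i)"
    using j assms(1) by (simp add: x2_sig_def)
  moreover have "y1_sig w1 r t j = bit w1 ((t - 1) * e + i)"
    using j assms(1) by (simp add: y1_sig_def)
  ultimately show ?thesis
    using j params by auto
qed

lemma y1_slot_jammed:
  assumes "1 \<le> t" "t < N" "k + e < j" "j \<le> k + e + jam t"
  shows "(1 \<le> j \<and> j \<le> n \<and> ((k < j \<and> x1_sig w1 q1 ls t (j - k)) \<noteq> x2_sig w2 t j))
    = y1_sig w1 (xor q1 (private_bits w2)) t j"
proof -
  define i where "i = j - k - e - 1"
  have j: "j = k + e + 1 + i" "i < jam t"
    using assms(3,4) unfolding i_def by linarith+
  have "prefix_sum jam t + i < key_bits"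
    unfolding key_bits_def using prefix_sum_slot_less[of t N i jam] assms(2) j(2) by simp
  then have "y1_sig w1 (xor q1 (private_bits w2)) t j
      = (bit q1 (prefix_sum jam t + i) \<noteq> bit w2 (link_bits + prefix_sum jam t + i))"
    using j assms(1) by (simp add: y1_sig_def bit_xor_iff bit_private_bits add.assoc)
  moreover have "x1_sig w1 q1 ls t (j - k) = bit q1 (prefix_sum jam t + i)"
    using j assms(1) by (simp add: x1_sig_def)
  moreover have "x2_sig w2 t j = bit w2 (link_bits + prefix_sum jam t + i)"
    using j assms(1) by (simp add: x2_sig_def)
  ultimately show ?thesis
    using j params(1-4) params(5)[of t] by auto
qed

lemma y1_slot_fresh:
  assumes "1 \<le> t" "k + e + jam t < j" "j \<le> n"
  shows "(1 \<le> j \<and> j \<le> n \<and> ((k < j \<and> x1_sig w1 q1 ls t (j - k)) \<noteq> x2_sig w2 t j)) = y1_sig w1 r t j"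
proof -
  define i where "i = j - k - e - jam t - 1"
  have j: "j = k + e + jam t + 1 + i" "j - k = e + jam t + 1 + i" "e + jam t + 1 + i \<le> m"
    using assms(2,3) params(1-4) unfolding i_def by linarith+
  have "x1_sig w1 q1 ls t (j - k) = bit w1 (link_bits + prefix_sum fresh t + i)"
    using j assms(1) by (simp add: x1_sig_def)
  moreover have "\<not> x2_sig w2 t j"
    using j by (simp add: x2_sig_def)
  moreover have "y1_sig w1 r t j = bit w1 (link_bits + prefix_sum fresh t + i)"
    using j assms by (simp add: y1_sig_def)
  ultimately show ?thesis
    using j assms(3) params(1) by auto
qed

lemma y1_slot:
  assumes "t < N" and "1 \<le> t \<Longrightarrow> ls ! (t - 1) = link_sig (t - 1) w2"
  shows "(1 \<le> j \<and> j \<le> n \<and> ((k < j \<and> x1_sig w1 q1 ls t (j - k)) \<noteq> x2_sig w2 t j))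
    = y1_sig w1 (xor q1 (private_bits w2)) t j"
proof (cases "1 \<le> t")
  case True
  have "jam t \<le> J" by (rule params)
  then consider "j \<le> k" | "k < j \<and> j \<le> k + e" | "k + e < j \<and> j \<le> k + e + jam t"
    | "k + e + jam t < j \<and> j \<le> n" | "n < j"
    using params by linarith
  then show ?thesis
  proof cases
    case 1
    then show ?thesis by (simp add: x2_sig_def y1_sig_def)
  next
    case 5
    then show ?thesis
      using params(4) \<open>jam t \<le> J\<close> by (simp add: y1_sig_def)
  next
    case 2
    then show ?thesis
      using True assms(2) by (intro y1_slot_cancelled) auto
  next
    case 3
    then show ?thesis
      using True assms(1) by (intro y1_slot_jammed) auto
  next
    case 4
    then show ?thesis
      using True by (intro y1_slot_fresh) auto
  qed
qed (simp add: x1_sig_def x2_sig_def y1_sig_def)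

definition consistent1 :: "nat \<Rightarrow> f2vec list \<Rightarrow> bool" where
  "consistent1 w y \<longleftrightarrow> (\<forall>t. 1 \<le> t \<and> t < N \<longrightarrow>
      (\<forall>i<e. (y ! t) (k + 1 + i) = bit w ((t - 1) * e + i)) \<and>
      (\<forall>i<fresh t. (y ! t) (k + e + jam t + 1 + i) = bit w (link_bits + prefix_sum fresh t + i)))"

definition consistent2 :: "nat \<Rightarrow> f2vec list \<Rightarrow> bool" where
  "consistent2 w y \<longleftrightarrow> (\<forall>t. 1 \<le> t \<and> t < N \<longrightarrow>
      (\<forall>i<e. (y ! t) (2 * k + 1 + i) = bit w ((t - 1) * e + i)) \<and>
      (\<forall>i<jam t. (y ! t) (2 * k + e + 1 + i) = bit w (link_bits + prefix_sum jam t + i)))"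

definition scheme_code :: code where
  "scheme_code = \<lparr>M1 = M1n, M2 = M2n, P1 = pmf_of_set {..<2 ^ key_bits}, P2 = return_pmf 0,
     enc1 = (\<lambda>t w1 q1 ls. x1_sig w1 q1 ls t), enc2 = (\<lambda>t w2 q2. x2_sig w2 t),
     link = (\<lambda>s w2 q2. link_sig s w2),
     dec1 = (\<lambda>y. SOME w. w < M1n \<and> consistent1 w y), dec2 = (\<lambda>y. SOME w. w < M2n \<and> consistent2 w y)\<rparr>"

lemma Y1_scheme_code:
  "Y1 m n N scheme_code \<omega> = map (y1_sig (W1v \<omega>) (xor (fst (snd (snd \<omega>))) (private_bits (W2v \<omega>)))) [0..<N]"
proof -
  obtain w1 w2 q1 q2 where \<omega>: "\<omega> = (w1, w2, q1, q2)" by (cases \<omega>)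
  have "(1 \<le> j \<and> j \<le> n \<and> ((n - m < j \<and> x1 scheme_code \<omega> t (j - (n - m))) \<noteq> x2 scheme_code \<omega> t j))
      = y1_sig w1 (xor q1 (private_bits w2)) t j" if "t < N" for t j
    using y1_slot[OF that, of "map (\<lambda>s. link_sig s w2) [0..<t]"]
    by (simp add: \<omega> x1_def x2_def scheme_code_def k_def)
  then show ?thesis
    unfolding Y1_weak_interference[OF m_lt_n] by (auto simp: \<omega> W1v_def W2v_def fun_eq_iff)
qed

lemma Y2_scheme_code:
  "Y2 m n N scheme_code \<omega> = map (\<lambda>t j. 1 \<le> j \<and> j \<le> n \<and> k < j \<and> x2_sig (W2v \<omega>) t (j - k)) [0..<N]"
  unfolding Y2_weak_interference[OF m_lt_n] by (cases \<omega>) (simp add: x2_def scheme_code_def W2v_def k_def)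

lemma consistent1_W1v: "consistent1 (W1v \<omega>) (Y1 m n N scheme_code \<omega>)"
  using params by (auto simp: consistent1_def Y1_scheme_code y1_sig_def fresh_def)

lemma consistent2_W2v: "consistent2 (W2v \<omega>) (Y2 m n N scheme_code \<omega>)"
  unfolding consistent2_def
proof (intro allI impI conjI)
  fix t i assume t: "1 \<le> t \<and> t < N"
  have "2 * k + e + jam t \<le> n"
    using params(4) params(5)[of t] by linarith
  then show "i < e \<Longrightarrow> (Y2 m n N scheme_code \<omega> ! t) (2 * k + 1 + i) = bit (W2v \<omega>) ((t - 1) * e + i)"
    and "i < jam t \<Longrightarrow>
      (Y2 m n N scheme_code \<omega> ! t) (2 * k + e + 1 + i) = bit (W2v \<omega>) (link_bits + prefix_sum jam t + i)"
    using t by (auto simp: Y2_scheme_code x2_sig_def)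
qed

lemma consistent1_unique:
  assumes "w < 2 ^ (link_bits + prefix_sum fresh N)" "w' < 2 ^ (link_bits + prefix_sum fresh N)"
    and "consistent1 w y" "consistent1 w' y"
  shows "w = w'"
proof (rule eq_if_slot_bits_eq[where f=fresh])
  show "w < 2 ^ ((N - 1) * e + prefix_sum fresh N)" "w' < 2 ^ ((N - 1) * e + prefix_sum fresh N)"
    using assms(1,2) by (simp_all add: link_bits_def)
  show "bit w ((t - 1) * e + i) = bit w' ((t - 1) * e + i)" if "1 \<le> t" "t < N" "i < e" for t i
    using assms(3,4) that unfolding consistent1_def by metis
  show "bit w ((N - 1) * e + prefix_sum fresh t + i) = bit w' ((N - 1) * e + prefix_sum fresh t + i)"
    if "1 \<le> t" "t < N" "i < fresh t" for t i
    using assms(3,4) that unfolding consistent1_def link_bits_def by metis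
qed (simp add: fresh_def)

lemma consistent2_unique:
  assumes "w < 2 ^ (link_bits + key_bits)" "w' < 2 ^ (link_bits + key_bits)"
    and "consistent2 w y" "consistent2 w' y"
  shows "w = w'"
proof (rule eq_if_slot_bits_eq[where f=jam])
  show "w < 2 ^ ((N - 1) * e + prefix_sum jam N)" "w' < 2 ^ ((N - 1) * e + prefix_sum jam N)"
    using assms(1,2) by (simp_all add: link_bits_def key_bits_def)
  show "bit w ((t - 1) * e + i) = bit w' ((t - 1) * e + i)" if "1 \<le> t" "t < N" "i < e" for t i
    using assms(3,4) that unfolding consistent2_def by metis
  show "bit w ((N - 1) * e + prefix_sum jam t + i) = bit w' ((N - 1) * e + prefix_sum jam t + i)"
    if "1 \<le> t" "t < N" "i < jam t" for t i
    using assms(3,4) that unfolding consistent2_def link_bits_def by metis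
qed (simp add: jam_def)

lemma err_prob_scheme_code:
  assumes "0 < M1n" "0 < M2n" "M1n \<le> 2 ^ (link_bits + prefix_sum fresh N)" "M2n \<le> 2 ^ (link_bits + key_bits)"
  shows "err_prob m n N scheme_code = 0"
proof -
  have "dec1 scheme_code (Y1 m n N scheme_code \<omega>) = W1v \<omega> \<and> dec2 scheme_code (Y2 m n N scheme_code \<omega>) = W2v \<omega>"
    if "\<omega> \<in> set_pmf (src scheme_code)" for \<omega>
  proof -
    have W: "W1v \<omega> < M1n" "W2v \<omega> < M2n"
      using set_pmf_src_messages[of scheme_code \<omega>] that assms(1,2) by (simp_all add: scheme_code_def)
    have "(SOME w. w < M1n \<and> consistent1 w (Y1 m n N scheme_code \<omega>)) = W1v \<omega>"
    proof (rule some_equality)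
      show "w = W1v \<omega>" if "w < M1n \<and> consistent1 w (Y1 m n N scheme_code \<omega>)" for w
        using that W assms(3) consistent1_W1v[of \<omega>] by (intro consistent1_unique) (auto intro: less_le_trans)
    qed (simp add: W consistent1_W1v)
    moreover have "(SOME w. w < M2n \<and> consistent2 w (Y2 m n N scheme_code \<omega>)) = W2v \<omega>"
    proof (rule some_equality)
      show "w = W2v \<omega>" if "w < M2n \<and> consistent2 w (Y2 m n N scheme_code \<omega>)" for w
        using that W assms(4) consistent2_W2v[of \<omega>] by (intro consistent2_unique) (auto intro: less_le_trans)
    qed (simp add: W consistent2_W2v)
    ultimately show ?thesis
      by (simp add: scheme_code_def)
  qed
  then show ?thesis
    unfolding err_prob_def by (subst measure_pmf_zero_iff) blast
qed

lemma finite_ranges_scheme_code: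
  assumes "0 < M1n" "0 < M2n"
  shows "finite (W1v ` set_pmf (src scheme_code))" "finite (W2v ` set_pmf (src scheme_code))"
    "finite (Y1 m n N scheme_code ` set_pmf (src scheme_code))"
    "finite (Y2 m n N scheme_code ` set_pmf (src scheme_code))"
proof -
  have "M1 scheme_code = M1n" "M2 scheme_code = M2n"
    by (simp_all add: scheme_code_def)
  then show "finite (W1v ` set_pmf (src scheme_code))" "finite (W2v ` set_pmf (src scheme_code))"
    using set_pmf_src_messages[of scheme_code] assms
    by (auto intro: finite_imageI_subset[OF finite_lessThan[of M1n]]
        finite_imageI_subset[OF finite_lessThan[of M2n]])
  show "finite (Y1 m n N scheme_code ` set_pmf (src scheme_code))"
    "finite (Y2 m n N scheme_code ` set_pmf (src scheme_code))"
    by (rule finite_image_lists_of_vecs_on[OF _ Y1_in_lists_of_len], simp,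
        rule finite_image_lists_of_vecs_on[OF _ Y2_in_lists_of_len], simp)
qed

text \<open>Receiver 1's output is a function of \<open>W1\<close> and \<open>Q1 xor private_bits W2\<close>; the one-time pad
  makes the latter uniform and independent of \<open>W2\<close>.\<close>

lemma secret_W2v_Y1:
  assumes "0 < M1n" "0 < M2n"
  shows "MI scheme_code W2v (Y1 m n N scheme_code) = 0"
proof -
  let ?src = "src scheme_code"
  define F where "F = (\<lambda>(w1, q1). map (y1_sig w1 q1) [0..<N])"
  define \<Psi> where "\<Psi> = (\<lambda>\<omega> :: nat \<times> nat \<times> nat \<times> nat. F (W1v \<omega>, fst (snd (snd \<omega>))))"
  define T where "T = (\<lambda>(w1 :: nat, w2 :: nat, q1 :: nat, q2 :: nat). (w1, w2, xor q1 (private_bits w2), q2))"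
  have T: "map_pmf T ?src = ?src"
    unfolding T_def by (rule map_pmf_src_xor_key) (auto simp: private_bits_def scheme_code_def)
  have Y1_T: "Y1 m n N scheme_code = (\<lambda>\<omega>. \<Psi> (T \<omega>))" and W2v_T: "W2v (T \<omega>) = W2v \<omega>" for \<omega>
    by (auto simp: fun_eq_iff Y1_scheme_code \<Psi>_def F_def T_def W1v_def W2v_def split: prod.splits)
  have "map_pmf (\<lambda>\<omega>. (W2v \<omega>, \<Psi> \<omega>)) ?src = map_pmf prod.swap (map_pmf (\<lambda>\<omega>. (\<Psi> \<omega>, W2v \<omega>)) ?src)"
    by (simp add: map_pmf_comp)
  also have "\<dots> = map_pmf prod.swap (pair_pmf (map_pmf \<Psi> ?src) (map_pmf W2v ?src))"
    using src_indep[of F fst scheme_code] by (simp add: \<Psi>_def)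
  also have "\<dots> = pair_pmf (map_pmf W2v ?src) (map_pmf \<Psi> ?src)"
    by (simp add: pair_commute_pmf[of "map_pmf W2v ?src"] map_pmf_comp split_def) (rule map_pmf_cong; auto)
  finally have "map_pmf (\<lambda>\<omega>. (W2v \<omega>, \<Psi> \<omega>)) ?src = pair_pmf (map_pmf W2v ?src) (map_pmf \<Psi> ?src)" .
  moreover have "map_pmf (\<lambda>\<omega>. (W2v \<omega>, Y1 m n N scheme_code \<omega>)) ?src
      = map_pmf (\<lambda>\<omega>. (W2v \<omega>, \<Psi> \<omega>)) (map_pmf T ?src)"
    "map_pmf (Y1 m n N scheme_code) ?src = map_pmf \<Psi> (map_pmf T ?src)"
    by (simp_all add: map_pmf_comp Y1_T W2v_T)
  ultimately show ?thesis
    using finite_ranges_scheme_code[OF assms] unfolding T by (intro MI_eq_0_of_indep) simp_all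
qed

lemma secret_W1v_Y2:
  assumes "0 < M1n" "0 < M2n"
  shows "MI scheme_code W1v (Y2 m n N scheme_code) = 0"
proof -
  define G where "G = (\<lambda>(w2 :: nat, q2 :: nat). map (\<lambda>t j. 1 \<le> j \<and> j \<le> n \<and> k < j \<and> x2_sig w2 t (j - k)) [0..<N])"
  have Y2_eq: "Y2 m n N scheme_code = (\<lambda>\<omega>. G (W2v \<omega>, snd (snd (snd \<omega>))))"
    by (simp add: fun_eq_iff Y2_scheme_code G_def)
  show ?thesis
    using finite_ranges_scheme_code[OF assms] src_indep[of fst G scheme_code]
    unfolding Y2_eq by (intro MI_eq_0_of_indep) simp_all
qed

lemma bit_counts:
  assumes "T0 \<le> N"
  shows "key_bits = J * (N - max 1 T0)" "link_bits + prefix_sum fresh N + key_bits = (N - 1) * m"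
proof -
  have "key_bits = J * card {s\<in>{..<N}. 1 \<le> s \<and> T0 \<le> s}"
    unfolding key_bits_def prefix_sum_def jam_def by (simp add: sum.inter_filter[symmetric])
  also have "{s\<in>{..<N}. 1 \<le> s \<and> T0 \<le> s} = {max 1 T0..<N}"
    by auto
  finally show "key_bits = J * (N - max 1 T0)"
    by simp
  have "prefix_sum fresh N + key_bits = (\<Sum>s<N. if 1 \<le> s then m - e else 0)"
    unfolding key_bits_def prefix_sum_def sum.distrib[symmetric]
    using params(3) params(5) by (intro sum.cong) (auto simp: fresh_def jam_def)
  also have "\<dots> = (m - e) * card {s\<in>{..<N}. 1 \<le> s}"
    by (simp add: sum.inter_filter[symmetric])
  also have "{s\<in>{..<N}. 1 \<le> s} = {1..<N}"
    by auto
  finally have "prefix_sum fresh N + key_bits = (N - 1) * (m - e)"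
    by simp
  then have "link_bits + prefix_sum fresh N + key_bits = (N - 1) * (e + (m - e))"
    unfolding link_bits_def by (simp add: algebra_simps)
  also have "e + (m - e) = m"
    using params(3) by linarith
  finally show "link_bits + prefix_sum fresh N + key_bits = (N - 1) * m" .
qed

lemma secure_code_scheme_code:
  assumes "M1n = nat \<lceil>2 powr (real N * R1)\<rceil>" "M2n = nat \<lceil>2 powr (real N * R2)\<rceil>"
  shows "secure_code m n C N R1 R2 scheme_code"
proof -
  have "link_sig s w2 < 2 ^ C" for s w2 :: nat
  proof -
    have "link_sig s w2 < 2 ^ e"
      unfolding link_sig_def by (rule take_bit_nat_less_exp)
    also have "(2 :: nat) ^ e \<le> 2 ^ C"
      using params(2) by (simp add: power_increasing)
    finally show ?thesis .
  qed
  moreover have pos: "0 < M1n" "0 < M2n"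
    using assms by simp_all
  ultimately show ?thesis
    using secret_W2v_Y1[OF pos] secret_W1v_Y2[OF pos] unfolding secure_code_def
    by (simp add: scheme_code_def flip: assms)
qed

lemma err_prob_scheme_code_eq_0:
  assumes "T0 \<le> N" "M1n = nat \<lceil>2 powr (real N * R1)\<rceil>" "M2n = nat \<lceil>2 powr (real N * R2)\<rceil>"
    and "real N * R1 \<le> real ((N - 1) * m - J * (N - max 1 T0))"
    and "real N * R2 \<le> real ((N - 1) * e + J * (N - max 1 T0))"
  shows "err_prob m n N scheme_code = 0"
proof (rule err_prob_scheme_code)
  show "0 < M1n" "0 < M2n"
    using assms(2,3) by simp_all
  have "link_bits + prefix_sum fresh N = (N - 1) * m - J * (N - max 1 T0)"
    using bit_counts[OF assms(1)] by linarith
  then show "M1n \<le> 2 ^ (link_bits + prefix_sum fresh N)"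
    unfolding assms(2) using assms(4) by (simp only: nat_ceiling_powr_le_power2)
  have "link_bits + key_bits = (N - 1) * e + J * (N - max 1 T0)"
    using bit_counts(1)[OF assms(1)] by (simp add: link_bits_def)
  then show "M2n \<le> 2 ^ (link_bits + key_bits)"
    unfolding assms(3) using assms(5) by (simp only: nat_ceiling_powr_le_power2)
qed

end

lemma achievable_if_eventually_fits:
  fixes m n C :: nat and R1 R2 :: real and T0 :: "nat \<Rightarrow> nat"
  assumes mn: "m < n" "n < 2 * m" and R: "0 \<le> R1" "0 \<le> R2" and T0: "\<And>N. T0 N \<le> N"
  defines "e \<equiv> min C (2 * m - n)"
  defines "J \<equiv> 2 * m - n - e"
  assumes fits: "\<forall>\<^sub>F N in sequentially. real N * R1 \<le> real ((N - 1) * m - J * (N - max 1 (T0 N)))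
    \<and> real N * R2 \<le> real ((N - 1) * e + J * (N - max 1 (T0 N)))"
  shows "achievable m n C (R1, R2)"
proof -
  define code where "code N = time_sharing_scheme.scheme_code m n C N (T0 N)
    (nat \<lceil>2 powr (real N * R1)\<rceil>) (nat \<lceil>2 powr (real N * R2)\<rceil>)" for N
  have scheme: "time_sharing_scheme m n"
    using mn by unfold_locales
  have "secure_code m n C N R1 R2 (code N)" for N
    unfolding code_def by (rule time_sharing_scheme.secure_code_scheme_code[OF scheme]) simp_all
  moreover have "\<forall>\<^sub>F N in sequentially. err_prob m n N (code N) = 0"
    using fits unfolding code_def e_def J_def
    by eventually_elim (intro time_sharing_scheme.err_prob_scheme_code_eq_0[OF scheme T0];
        auto simp: time_sharing_scheme.e_def[OF scheme] time_sharing_scheme.J_def[OF scheme])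
  then have "(\<lambda>N. err_prob m n N (code N)) \<longlonglongrightarrow> 0"
    by (rule tendsto_eventually)
  ultimately show ?thesis
    unfolding achievable_def using R by auto
qed

lemma eventually_linear_le:
  fixes b :: "nat \<Rightarrow> nat" and R a K :: real
  assumes "R = 0 \<or> R < a" "\<And>N. real N * a - K \<le> real (b N)"
  shows "\<forall>\<^sub>F N in sequentially. real N * R \<le> real (b N)"
proof (cases "R = 0")
  case False
  with assms(1) have "0 < a - R" by auto
  obtain N0 :: nat where N0: "K / (a - R) \<le> real N0"
    using real_arch_simple by blast
  have "real N * R \<le> real (b N)" if "N0 \<le> N" for N
  proof -
    have "K \<le> real N0 * (a - R)"
      using N0 \<open>0 < a - R\<close> by (simp add: divide_le_eq)
    also have "\<dots> \<le> real N * (a - R)"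
      using that \<open>0 < a - R\<close> by (simp add: mult_right_mono)
    finally show ?thesis
      using assms(2)[of N] by (simp add: algebra_simps)
  qed
  then show ?thesis
    unfolding eventually_sequentially by blast
qed simp

lemma time_sharing_slots:
  fixes lam :: real
  assumes "0 \<le> lam" "lam \<le> 1"
  shows "nat \<lceil>lam * real N\<rceil> \<le> N"
    and "real (N - max 1 (nat \<lceil>lam * real N\<rceil>)) \<le> (1 - lam) * real N"
    and "(1 - lam) * real N - 2 \<le> real (N - max 1 (nat \<lceil>lam * real N\<rceil>))"
proof -
  have "lam * real N \<le> real N"
    using assms by (simp add: mult_left_le_one_le)
  then show le: "nat \<lceil>lam * real N\<rceil> \<le> N"
    by (simp add: nat_le_iff ceiling_le_iff)
  have "lam * real N \<le> real (nat \<lceil>lam * real N\<rceil>)"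
    by linarith
  then show "real (N - max 1 (nat \<lceil>lam * real N\<rceil>)) \<le> (1 - lam) * real N"
    using le by (simp add: algebra_simps)
  have "real (nat \<lceil>lam * real N\<rceil>) \<le> lam * real N + 1"
    using assms by (simp add: ceiling_less_iff)
  then show "(1 - lam) * real N - 2 \<le> real (N - max 1 (nat \<lceil>lam * real N\<rceil>))"
    by (simp add: algebra_simps)
qed

theorem achievable_time_sharing:
  fixes m n C :: nat and lam R1 R2 :: real
  defines "e \<equiv> min C (2 * m - n)"
  defines "J \<equiv> 2 * m - n - e"
  assumes mn: "m < n" "n < 2 * m" and lam: "0 \<le> lam" "lam \<le> 1" and R: "0 \<le> R1" "0 \<le> R2"
    and R1: "R1 = 0 \<or> R1 < real m - (1 - lam) * real J"
    and R2: "R2 = 0 \<or> R2 < real e + (1 - lam) * real J"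
  shows "achievable m n C (R1, R2)"
proof -
  define Q where "Q N = N - max 1 (nat \<lceil>lam * real N\<rceil>)" for N
  have JQ: "J * Q N \<le> (N - 1) * m" for N
  proof -
    have "J * Q N \<le> m * (N - 1)"
      using mn by (intro mult_le_mono) (auto simp: J_def e_def Q_def)
    then show ?thesis by (simp add: mult.commute)
  qed
  have low1: "real N * (real m - (1 - lam) * real J) - real m \<le> real ((N - 1) * m - J * Q N)" for N
  proof -
    have "real ((N - 1) * m - J * Q N) = real ((N - 1) * m) - real J * real (Q N)"
      using of_nat_diff[OF JQ[of N]] by simp
    moreover have "real N * real m - real m \<le> real ((N - 1) * m)"
      by (cases N) (simp_all add: algebra_simps)
    moreover have "real J * real (Q N) \<le> real J * ((1 - lam) * real N)"
      using time_sharing_slots(2)[OF lam, of N] by (intro mult_left_mono) (simp_all add: Q_def)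
    ultimately show ?thesis
      by (simp add: algebra_simps)
  qed
  have low2: "real N * (real e + (1 - lam) * real J) - (real e + 2 * real J)
      \<le> real ((N - 1) * e + J * Q N)" for N
  proof -
    have "real N * real e - real e \<le> real ((N - 1) * e)"
      by (cases N) (simp_all add: algebra_simps)
    moreover have "real J * ((1 - lam) * real N - 2) \<le> real J * real (Q N)"
      using time_sharing_slots(3)[OF lam, of N] by (intro mult_left_mono) (simp_all add: Q_def)
    ultimately show ?thesis
      by (simp add: algebra_simps)
  qed
  have "\<forall>\<^sub>F N in sequentially. real N * R1 \<le> real ((N - 1) * m - J * Q N)
      \<and> real N * R2 \<le> real ((N - 1) * e + J * Q N)"
    using eventually_linear_le[OF R1 low1] eventually_linear_le[OF R2 low2] by (rule eventually_conj)
  then show ?thesis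
    unfolding Q_def J_def e_def by (intro achievable_if_eventually_fits[OF mn R time_sharing_slots(1)[OF lam]])
qed

definition secrecy_region :: "nat \<Rightarrow> nat \<Rightarrow> nat \<Rightarrow> (real \<times> real) set" where
  "secrecy_region m n C = {(R1, R2). 0 \<le> R1 \<and> 0 \<le> R2 \<and> R1 \<le> real m \<and> R2 \<le> 2 * real m - real n \<and>
     R1 + R2 \<le> real m + real C}"

lemma closed_secrecy_region: "closed (secrecy_region m n C)"
proof -
  have "secrecy_region m n C = {x. 0 \<le> fst x} \<inter> {x. 0 \<le> snd x} \<inter> {x. fst x \<le> real m}
      \<inter> {x. snd x \<le> 2 * real m - real n} \<inter> {x. fst x + snd x \<le> real m + real C}"
    by (auto simp: secrecy_region_def)
  then show ?thesis
    by (simp only:) (intro closed_Int closed_Collect_le continuous_intros)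
qed

lemma achievable_subset_secrecy_region:
  assumes "m < n" "n < 2 * m"
  shows "{R. achievable m n C R} \<subseteq> secrecy_region m n C"
proof
  fix R assume "R \<in> {R. achievable m n C R}"
  moreover obtain R1 R2 where "R = (R1, R2)"
    by fastforce
  ultimately show "R \<in> secrecy_region m n C"
    using achievable_imp_bounds[OF assms, of C R1 R2] by (simp add: secrecy_region_def achievable_def)
qed

text \<open>The corner points \<open>(m, e)\<close> and \<open>(m - J, 2m - n)\<close> of the region are reached with
  \<open>\<lambda> = 1\<close> and \<open>\<lambda> = 0\<close>; every point of the region lies below the segment between them.\<close>

lemma time_sharing_parameter:
  fixes m n C :: nat and R1 R2 :: real
  defines "e \<equiv> min C (2 * m - n)"
  defines "J \<equiv> 2 * m - n - e"
  assumes "m < n" "n < 2 * m" "(R1, R2) \<in> secrecy_region m n C"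
  obtains lam where "0 \<le> lam" "lam \<le> 1" "R1 \<le> real m - (1 - lam) * real J" "R2 \<le> real e + (1 - lam) * real J"
proof (cases "R2 \<le> real e")
  case True
  then show ?thesis
    using that[of 1] assms(5) by (simp add: secrecy_region_def)
next
  case False
  have eJ: "real e + real J = 2 * real m - real n"
    using assms(3,4) by (simp add: J_def e_def)
  then have J: "0 < real J"
    using False assms(5) by (auto simp: secrecy_region_def)
  then have "e = C"
    unfolding J_def e_def by (cases "C \<le> 2 * m - n") auto
  show ?thesis
  proof (rule that[of "1 - (R2 - real e) / real J"])
    show "0 \<le> 1 - (R2 - real e) / real J" "1 - (R2 - real e) / real J \<le> 1"
      using J False eJ assms(5) by (simp_all add: secrecy_region_def divide_le_eq)
  qed (use J \<open>e = C\<close> assms(5) in \<open>auto simp: secrecy_region_def\<close>)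
qed

lemma secrecy_region_subset_closure_achievable:
  assumes mn: "m < n" "n < 2 * m"
  shows "secrecy_region m n C \<subseteq> closure {R. achievable m n C R}"
proof
  fix R assume R: "R \<in> secrecy_region m n C"
  obtain R1 R2 where R12: "R = (R1, R2)" "0 \<le> R1" "0 \<le> R2"
    using R by (auto simp: secrecy_region_def)
  obtain lam where lam: "0 \<le> lam" "lam \<le> 1"
    "R1 \<le> real m - (1 - lam) * real (2 * m - n - min C (2 * m - n))"
    "R2 \<le> real (min C (2 * m - n)) + (1 - lam) * real (2 * m - n - min C (2 * m - n))"
    using time_sharing_parameter[OF mn] R R12 by metis
  define s where "s j = 1 - inverse (real (Suc j))" for j
  have s: "0 \<le> s j" "s j < 1" for j
    by (simp_all add: s_def inverse_le_1_iff)
  have scaled: "s j * x = 0 \<or> s j * x < a" if "0 \<le> x" "x \<le> a" for j x a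
  proof (cases "x = 0")
    case False
    then have "s j * x < x"
      using s[of j] that by (simp add: mult_less_cancel_right2)
    then show ?thesis
      using that by simp
  qed simp
  have "s \<longlonglongrightarrow> 1 - 0"
    unfolding s_def by (intro tendsto_intros LIMSEQ_inverse_real_of_nat)
  then have "(\<lambda>j. (s j * R1, s j * R2)) \<longlonglongrightarrow> ((1 - 0) * R1, (1 - 0) * R2)"
    by (intro tendsto_intros)
  moreover have "achievable m n C (s j * R1, s j * R2)" for j
    by (rule achievable_time_sharing[OF mn lam(1,2)]) (use s R12 lam scaled in auto)
  ultimately show "R \<in> closure {R. achievable m n C R}"
    unfolding closure_sequential R12(1) by (intro exI[of _ "\<lambda>j. (s j * R1, s j * R2)"]) auto
qed

theorem theorem2:
  fixes m n C :: nat
  assumes "m \<ge> 1"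
    and "1 < real n / real m" and "real n / real m < 2"
  shows "secrecy_capacity_region m n C =
    {(R1, R2). 0 \<le> R1 \<and> 0 \<le> R2 \<and> R1 \<le> real m \<and> R2 \<le> 2 * real m - real n \<and>
               R1 + R2 \<le> real m + real C}"
proof -
  have "m < n" "n < 2 * m"
    using assms by (simp_all add: less_divide_eq divide_less_eq)
  then have "closure {R. achievable m n C R} = secrecy_region m n C"
    using achievable_subset_secrecy_region closed_secrecy_region secrecy_region_subset_closure_achievable
    by (metis closure_minimal subset_antisym)
  then show ?thesis
    unfolding secrecy_capacity_region_def secrecy_region_def .
qed

end
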